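(* Let $G$ be a forest of order $n$. Then at least one of the following holds: (i) the complement $\bar G$ is connected and has minimum degree at least $2$; or (ii) $\phi_T$ and $\phi_{\bar T}$ determine $G$ among all graphs of order $n$, i.e., every graph $G'$ of order $n$ whose oriented edge matrix and whose complement's oriented edge matrix have the same characteristic polynomials as those of $G$ and $\bar G$ respectively is isomorphic to $G$.
   Context: Graphs are finite and simple; $\bar G$ is the complement of $G$. For a graph with $m$ edges, list its $2m$ oriented edges $e_1,\ldots,e_{2m}$ (ordered pairs $(u,v)$ with $uv$ an edge). The oriented edge matrix $T$ is the $2m\times 2m$ matrix whose $(i,j)$-entry is $1$ if $e_i=(u,v)$, $e_j=(v,w)$ with $u\ne w$, and $0$ otherwise; $\phi_T(\lambda)=\det(\lambda I - T)$. $T$ denotes the oriented edge matrix of $G$ and $\bar T$ that of $\bar G$. *)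

theory Defs
  imports "Jordan_Normal_Form.Char_Poly" "HOL-Library.Product_Lexorder"
begin

definition is_graph :: "nat \<Rightarrow> (nat \<Rightarrow> nat \<Rightarrow> bool) \<Rightarrow> bool" where
  "is_graph n E \<longleftrightarrow> (\<forall>u v. E u v \<longrightarrow> u < n \<and> v < n \<and> u \<noteq> v \<and> E v u)"

definition compl_graph :: "nat \<Rightarrow> (nat \<Rightarrow> nat \<Rightarrow> bool) \<Rightarrow> nat \<Rightarrow> nat \<Rightarrow> bool" where
  "compl_graph n E u v \<longleftrightarrow> u < n \<and> v < n \<and> u \<noteq> v \<and> \<not> E u v"

definition is_cycle :: "(nat \<Rightarrow> nat \<Rightarrow> bool) \<Rightarrow> nat list \<Rightarrow> bool" where
  "is_cycle E cs \<longleftrightarrow> length cs \<ge> 3 \<and> distinct cs \<and>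
     (\<forall>i. Suc i < length cs \<longrightarrow> E (cs ! i) (cs ! Suc i)) \<and> E (last cs) (hd cs)"

definition is_forest :: "nat \<Rightarrow> (nat \<Rightarrow> nat \<Rightarrow> bool) \<Rightarrow> bool" where
  "is_forest n E \<longleftrightarrow> is_graph n E \<and> (\<nexists>cs. is_cycle E cs)"

definition graph_connected :: "nat \<Rightarrow> (nat \<Rightarrow> nat \<Rightarrow> bool) \<Rightarrow> bool" where
  "graph_connected n E \<longleftrightarrow> (\<forall>u<n. \<forall>v<n. E\<^sup>*\<^sup>* u v)"

definition degree :: "nat \<Rightarrow> (nat \<Rightarrow> nat \<Rightarrow> bool) \<Rightarrow> nat \<Rightarrow> nat" where
  "degree n E v = card {u. u < n \<and> E v u}"

definition min_degree_ge :: "nat \<Rightarrow> (nat \<Rightarrow> nat \<Rightarrow> bool) \<Rightarrow> nat \<Rightarrow> bool" where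
  "min_degree_ge n E k \<longleftrightarrow> (\<forall>v<n. degree n E v \<ge> k)"

text \<open>Oriented edges in a fixed (lexicographic) order; the characteristic polynomial
  does not depend on the chosen order.\<close>
definition oriented_edges :: "nat \<Rightarrow> (nat \<Rightarrow> nat \<Rightarrow> bool) \<Rightarrow> (nat \<times> nat) list" where
  "oriented_edges n E = sorted_list_of_set {(u, v). u < n \<and> v < n \<and> E u v}"

definition oriented_edge_matrix :: "nat \<Rightarrow> (nat \<Rightarrow> nat \<Rightarrow> bool) \<Rightarrow> int mat" where
  "oriented_edge_matrix n E =
     (let es = oriented_edges n E; k = length es in
      mat k k (\<lambda>(i, j). if snd (es ! i) = fst (es ! j) \<and> fst (es ! i) \<noteq> snd (es ! j)
                        then 1 else 0))"

definition phi_T :: "nat \<Rightarrow> (nat \<Rightarrow> nat \<Rightarrow> bool) \<Rightarrow> int poly" where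
  "phi_T n E = char_poly (oriented_edge_matrix n E)"

definition graph_iso :: "nat \<Rightarrow> (nat \<Rightarrow> nat \<Rightarrow> bool) \<Rightarrow> (nat \<Rightarrow> nat \<Rightarrow> bool) \<Rightarrow> bool" where
  "graph_iso n E E' \<longleftrightarrow> (\<exists>f. bij_betw f {..<n} {..<n} \<and>
      (\<forall>u<n. \<forall>v<n. E u v \<longleftrightarrow> E' (f u) (f v)))"

end

theory Submission
  imports Defs "Jordan_Normal_Form.Schur_Decomposition"
begin

text \<open>Powers of the oriented edge matrix count closed non-backtracking walks, so \<open>\<phi>\<^sub>T\<close>
  determines the number of edges, whether the graph has a cycle, and (via \<open>tr T\<^sup>3\<close>) its
  triangles. For a forest \<open>G\<close> and a graph \<open>G'\<close> with the same pair of polynomials, \<open>G'\<close> is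
  therefore a forest with as many edges, and comparing the triangles of the complements shows
  that both have the same \<open>\<Sum> d(d - 1)\<close>. If (i) fails, some vertex of \<open>G\<close> is adjacent to all
  but at most one other vertex, so \<open>G\<close> is a star or a broom (a star with one edge subdivided).
  These two numbers then force \<open>G'\<close> to have the same shape: counting ordered pairs of disjoint
  edges, a star allows none and a broom only few, which pins down the centre of \<open>G'\<close>.\<close>

section \<open>Traces of powers\<close>

definition trace :: "'a::comm_ring_1 mat \<Rightarrow> 'a" where
  "trace A = (\<Sum>i<dim_row A. A $$ (i,i))"

lemma trace_mult_comm:
  fixes A B :: "'a::comm_ring_1 mat"
  assumes A: "A \<in> carrier_mat n n" and B: "B \<in> carrier_mat n n"
  shows "trace (A * B) = trace (B * A)"
proof -
  have "trace (A * B) = (\<Sum>i<n. \<Sum>l<n. A $$ (i,l) * B $$ (l,i))"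
    using A B by (simp add: trace_def scalar_prod_def atLeast0LessThan)
  also have "\<dots> = (\<Sum>l<n. \<Sum>i<n. B $$ (l,i) * A $$ (i,l))"
    by (subst sum.swap) (simp add: mult.commute)
  also have "\<dots> = trace (B * A)"
    using A B by (simp add: trace_def scalar_prod_def atLeast0LessThan)
  finally show ?thesis .
qed

lemma upper_triangular_mult:
  fixes A B :: "'a::comm_ring_1 mat"
  assumes A: "A \<in> carrier_mat n n" and B: "B \<in> carrier_mat n n"
    and "upper_triangular A" "upper_triangular B"
  shows "upper_triangular (A * B)"
proof
  fix i j assume ji: "j < i" and i: "i < dim_row (A * B)"
  have "A $$ (i,l) * B $$ (l,j) = 0" if "l < n" for l
  proof (cases "l < i")
    case True
    then show ?thesis using upper_triangularD[OF assms(3) True] A i by simp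
  next
    case False
    then show ?thesis using upper_triangularD[OF assms(4), of j l] B ji that by simp
  qed
  then show "(A * B) $$ (i,j) = 0"
    using A B i ji by (simp add: scalar_prod_def)
qed

lemma upper_triangular_mult_diag:
  fixes A B :: "'a::comm_ring_1 mat"
  assumes A: "A \<in> carrier_mat n n" and B: "B \<in> carrier_mat n n"
    and "upper_triangular A" "upper_triangular B" and i: "i < n"
  shows "(A * B) $$ (i,i) = A $$ (i,i) * B $$ (i,i)"
proof -
  have "A $$ (i,l) * B $$ (l,i) = 0" if "l < n" "l \<noteq> i" for l
  proof (cases "l < i")
    case True
    then show ?thesis using upper_triangularD[OF assms(3) True] A i by simp
  next
    case False
    then show ?thesis using upper_triangularD[OF assms(4), of i l] B that by simp
  qed
  then have "(\<Sum>l<n. A $$ (i,l) * B $$ (l,i)) = A $$ (i,i) * B $$ (i,i)"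
    using i by (subst sum.remove[of _ i]) (auto intro!: sum.neutral)
  then show ?thesis
    using A B i by (simp add: scalar_prod_def atLeast0LessThan)
qed

lemma upper_triangular_pow:
  fixes A :: "'a::comm_ring_1 mat"
  assumes A: "A \<in> carrier_mat n n" and uA: "upper_triangular A"
  shows "upper_triangular (A ^\<^sub>m k)"
proof (induct k)
  case (Suc k)
  then show ?case using upper_triangular_mult[OF _ A _ uA, of "A ^\<^sub>m k"] A by simp
qed simp

lemma upper_triangular_pow_diag:
  fixes A :: "'a::comm_ring_1 mat"
  assumes A: "A \<in> carrier_mat n n" and uA: "upper_triangular A" and i: "i < n"
  shows "(A ^\<^sub>m k) $$ (i,i) = A $$ (i,i) ^ k"
proof (induct k)
  case (Suc k)
  then show ?case
    using upper_triangular_mult_diag[OF _ A upper_triangular_pow[OF A uA] uA i] A by simp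
qed (use A i in simp)

lemma trace_pow_eq_sum_eigenvalues:
  fixes A :: "complex mat"
  assumes A: "A \<in> carrier_mat n n" and c: "char_poly A = (\<Prod>a \<leftarrow> es. [:- a, 1:])"
  shows "trace (A ^\<^sub>m k) = (\<Sum>a \<leftarrow> es. a ^ k)"
proof -
  obtain B P Q where s: "schur_decomposition A es = (B,P,Q)"
    by (cases "schur_decomposition A es") auto
  from schur_decomposition[OF A c s] have sim: "similar_mat_wit A B P Q"
    and uB: "upper_triangular B" and dB: "diag_mat B = es" by auto
  from similar_mat_witD2[OF A sim] have PQ: "Q * P = 1\<^sub>m n" and B: "B \<in> carrier_mat n n"
    and P: "P \<in> carrier_mat n n" and Q: "Q \<in> carrier_mat n n" by auto
  have Bk: "B ^\<^sub>m k \<in> carrier_mat n n" using B by simp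
  have "A ^\<^sub>m k = P * (B ^\<^sub>m k * Q)"
    using similar_mat_wit_pow_id[OF sim, of k] P B Q
    by (simp add: assoc_mult_mat[of _ n n _ n _ n])
  then have "trace (A ^\<^sub>m k) = trace ((B ^\<^sub>m k * Q) * P)"
    using trace_mult_comm[OF P, of "B ^\<^sub>m k * Q"] Bk Q by simp
  also have "(B ^\<^sub>m k * Q) * P = B ^\<^sub>m k"
    using Bk Q P PQ by (simp add: assoc_mult_mat[of _ n n _ n _ n] right_mult_one_mat)
  also have "trace (B ^\<^sub>m k) = (\<Sum>i<n. B $$ (i,i) ^ k)"
    using upper_triangular_pow_diag[OF B uB] B by (simp add: trace_def)
  also have "\<dots> = (\<Sum>a \<leftarrow> es. a ^ k)"
    unfolding dB[symmetric] diag_mat_def using B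
    by (simp add: atLeast0LessThan[symmetric] sum_list_sum_nth interv_sum_list_conv_sum_set_nat)
  finally show ?thesis .
qed

lemma char_poly_eq_imp_dim_eq:
  fixes A B :: "'a::comm_ring_1 mat"
  assumes "A \<in> carrier_mat k k" "B \<in> carrier_mat k' k'" "char_poly A = char_poly B"
  shows "k = k'"
  using degree_monic_char_poly[OF assms(1)] degree_monic_char_poly[OF assms(2)] assms(3) by simp

text \<open>Over \<open>\<complex>\<close> both traces are power sums of the common multiset of eigenvalues.\<close>

lemma char_poly_eq_imp_trace_pow_eq:
  fixes A B :: "int mat"
  assumes A: "A \<in> carrier_mat k k" and B: "B \<in> carrier_mat k' k'"
    and c: "char_poly A = char_poly B"
  shows "trace (A ^\<^sub>m p) = trace (B ^\<^sub>m p)"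
proof -
  have kk: "k = k'" by (rule char_poly_eq_imp_dim_eq[OF A B c])
  define Ac :: "complex mat" where "Ac = map_mat of_int A"
  define Bc :: "complex mat" where "Bc = map_mat of_int B"
  have Ac: "Ac \<in> carrier_mat k k" and Bc: "Bc \<in> carrier_mat k k"
    using A B kk by (auto simp: Ac_def Bc_def)
  have cc: "char_poly Ac = char_poly Bc"
    unfolding Ac_def Bc_def of_int_hom.char_poly_hom[OF A] of_int_hom.char_poly_hom[OF B] c ..
  obtain es where es: "char_poly Ac = (\<Prod>a \<leftarrow> es. [:- a, 1:])"
    using char_poly_factorized[OF Ac] by blast
  have "(of_int (trace (A ^\<^sub>m p)) :: complex) = trace (Ac ^\<^sub>m p)"
    unfolding Ac_def of_int_hom.mat_hom_pow[OF A, symmetric] using A by (simp add: trace_def)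
  also have "\<dots> = (\<Sum>a \<leftarrow> es. a ^ p)" by (rule trace_pow_eq_sum_eigenvalues[OF Ac es])
  also have "\<dots> = trace (Bc ^\<^sub>m p)"
    using trace_pow_eq_sum_eigenvalues[OF Bc] es cc by simp
  also have "\<dots> = of_int (trace (B ^\<^sub>m p))"
    unfolding Bc_def of_int_hom.mat_hom_pow[OF B, symmetric] using B by (simp add: trace_def)
  finally show ?thesis by simp
qed

section \<open>Walks in nonnegative matrices\<close>

lemma sum_pos_iff_ex_pos:
  fixes g :: "'b \<Rightarrow> 'a::{ordered_comm_monoid_add, linorder}"
  assumes "finite A" "\<And>x. x \<in> A \<Longrightarrow> g x \<ge> 0"
  shows "sum g A > 0 \<longleftrightarrow> (\<exists>x\<in>A. g x > 0)"
proof
  assume "sum g A > 0"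
  show "\<exists>x\<in>A. g x > 0"
  proof (rule ccontr)
    assume "\<not> ?thesis"
    then have "sum g A \<le> 0" by (auto intro: sum_nonpos simp: not_less)
    with \<open>sum g A > 0\<close> show False by simp
  qed
next
  assume "\<exists>x\<in>A. g x > 0"
  then obtain x where "x \<in> A" "g x > 0" ..
  then show "sum g A > 0" by (rule sum_pos2[OF assms(1)]) (use assms(2) in auto)
qed

definition positive_walk :: "'a::linordered_idom mat \<Rightarrow> nat \<Rightarrow> (nat \<Rightarrow> nat) \<Rightarrow> bool" where
  "positive_walk A p f \<longleftrightarrow> (\<forall>l\<le>p. f l < dim_row A) \<and> (\<forall>l<p. A $$ (f l, f (Suc l)) > 0)"

lemma nonneg_mat_pow_nonneg:
  fixes A :: "'a::linordered_idom mat"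
  assumes A: "A \<in> carrier_mat k k" and nn: "\<And>i j. i < k \<Longrightarrow> j < k \<Longrightarrow> A $$ (i,j) \<ge> 0"
    and "i < k" "j < k"
  shows "(A ^\<^sub>m p) $$ (i,j) \<ge> 0"
  using assms(3,4)
proof (induct p arbitrary: j)
  case (Suc p)
  then show ?case
    using A nn by (auto simp: scalar_prod_def intro!: sum_nonneg)
qed (use A in auto)

lemma nonneg_mat_pow_pos_iff:
  fixes A :: "'a::linordered_idom mat"
  assumes A: "A \<in> carrier_mat k k" and nn: "\<And>i j. i < k \<Longrightarrow> j < k \<Longrightarrow> A $$ (i,j) \<ge> 0"
    and i: "i < k" and "j < k"
  shows "(A ^\<^sub>m p) $$ (i,j) > 0 \<longleftrightarrow> (\<exists>f. f 0 = i \<and> f p = j \<and> positive_walk A p f)"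
  using assms(4)
proof (induct p arbitrary: j)
  case 0
  then show ?case
    using A i by (auto simp: positive_walk_def intro!: exI[of _ "\<lambda>_. i"])
next
  case (Suc p)
  have nn_pow: "l < k \<Longrightarrow> (A ^\<^sub>m p) $$ (i,l) \<ge> 0" for l
    by (rule nonneg_mat_pow_nonneg[OF A nn i])
  have "(A ^\<^sub>m Suc p) $$ (i,j) = (\<Sum>l<k. (A ^\<^sub>m p) $$ (i,l) * A $$ (l,j))"
    using A i Suc.prems by (simp add: scalar_prod_def atLeast0LessThan)
  also have "\<dots> > 0 \<longleftrightarrow> (\<exists>l<k. (A ^\<^sub>m p) $$ (i,l) * A $$ (l,j) > 0)"
    using nn_pow nn Suc.prems by (subst sum_pos_iff_ex_pos) auto
  also have "\<dots> \<longleftrightarrow> (\<exists>l<k. (A ^\<^sub>m p) $$ (i,l) > 0 \<and> A $$ (l,j) > 0)"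
  proof -
    have "(A ^\<^sub>m p) $$ (i,l) * A $$ (l,j) > 0 \<longleftrightarrow> (A ^\<^sub>m p) $$ (i,l) > 0 \<and> A $$ (l,j) > 0"
      if "l < k" for l
      using nn_pow[OF that] nn[OF that Suc.prems] by (auto simp: zero_less_mult_iff)
    then show ?thesis by blast
  qed
  also have "\<dots> \<longleftrightarrow> (\<exists>f. f 0 = i \<and> f (Suc p) = j \<and> positive_walk A (Suc p) f)"
  proof
    assume "\<exists>l<k. (A ^\<^sub>m p) $$ (i,l) > 0 \<and> A $$ (l,j) > 0"
    then obtain l f where "l < k" "A $$ (l,j) > 0" "f 0 = i" "f p = l" "positive_walk A p f"
      using Suc.hyps by blast
    then show "\<exists>f. f 0 = i \<and> f (Suc p) = j \<and> positive_walk A (Suc p) f"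
      using Suc.prems A
      by (intro exI[of _ "f(Suc p := j)"]) (auto simp: positive_walk_def le_Suc_eq less_Suc_eq)
  next
    assume "\<exists>f. f 0 = i \<and> f (Suc p) = j \<and> positive_walk A (Suc p) f"
    then obtain f where f: "f 0 = i" "f (Suc p) = j" "positive_walk A (Suc p) f" by blast
    then have "positive_walk A p f" "f p < k" "A $$ (f p, j) > 0"
      using A by (auto simp: positive_walk_def)
    then show "\<exists>l<k. (A ^\<^sub>m p) $$ (i,l) > 0 \<and> A $$ (l,j) > 0"
      using Suc.hyps f(1) by blast
  qed
  finally show ?case .
qed

lemma nonneg_mat_trace_pow_nonneg:
  fixes A :: "'a::linordered_idom mat"
  assumes A: "A \<in> carrier_mat k k" and nn: "\<And>i j. i < k \<Longrightarrow> j < k \<Longrightarrow> A $$ (i,j) \<ge> 0"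
  shows "trace (A ^\<^sub>m p) \<ge> 0"
  using A nonneg_mat_pow_nonneg[OF A nn] by (auto simp: trace_def intro!: sum_nonneg)

lemma nonneg_mat_trace_pow_pos_iff:
  fixes A :: "'a::linordered_idom mat"
  assumes A: "A \<in> carrier_mat k k" and nn: "\<And>i j. i < k \<Longrightarrow> j < k \<Longrightarrow> A $$ (i,j) \<ge> 0"
  shows "trace (A ^\<^sub>m p) > 0 \<longleftrightarrow> (\<exists>i<k. \<exists>f. f 0 = i \<and> f p = i \<and> positive_walk A p f)"
proof -
  have "trace (A ^\<^sub>m p) > 0 \<longleftrightarrow> (\<exists>i<k. (A ^\<^sub>m p) $$ (i,i) > 0)"
    using A nonneg_mat_pow_nonneg[OF A nn] by (simp add: trace_def, subst sum_pos_iff_ex_pos) auto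
  moreover have "(A ^\<^sub>m p) $$ (i,i) > 0 \<longleftrightarrow> (\<exists>f. f 0 = i \<and> f p = i \<and> positive_walk A p f)"
    if "i < k" for i
    using nonneg_mat_pow_pos_iff[OF A nn that that] .
  ultimately show ?thesis by auto
qed

lemma is_graphD:
  assumes "is_graph n E" "E u v"
  shows "u < n" "v < n" "u \<noteq> v" "E v u"
  using assms unfolding is_graph_def by blast+

lemma forest_no_triangle:
  assumes "is_forest n E"
  shows "\<not> (E a b \<and> E b c \<and> E c a)"
proof
  assume abc: "E a b \<and> E b c \<and> E c a"
  have "is_graph n E" using assms by (simp add: is_forest_def)
  then have "a \<noteq> b" "b \<noteq> c" "c \<noteq> a" using abc is_graphD by blast+
  then have "is_cycle E [a,b,c]"
    using abc unfolding is_cycle_def by (auto simp: nth_Cons split: nat.splits)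
  with assms show False by (simp add: is_forest_def)
qed

lemma forest_no_square:
  assumes "is_forest n E" "E a b" "E b c" "E c d" "E d a" "a \<noteq> c" "b \<noteq> d"
  shows False
proof -
  have "is_graph n E" using assms by (simp add: is_forest_def)
  then have "a \<noteq> b" "b \<noteq> c" "c \<noteq> d" "d \<noteq> a" using assms is_graphD by blast+
  then have "is_cycle E [a,b,c,d]"
    using assms unfolding is_cycle_def by (auto simp: nth_Cons split: nat.splits)
  with assms show False by (simp add: is_forest_def)
qed

lemma exists_first_repetition:
  fixes x :: "nat \<Rightarrow> nat"
  assumes "\<And>l. x l < n"
  shows "\<exists>i j. i < j \<and> x i = x j \<and> inj_on x {i..<j}"
proof -
  have "\<not> inj_on x {..n}"
  proof
    assume "inj_on x {..n}"
    then have "card (x ` {..n}) = Suc n" by (simp add: card_image)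
    moreover have "x ` {..n} \<subseteq> {..<n}" using assms by auto
    then have "card (x ` {..n}) \<le> n" using card_mono[OF finite_lessThan[of n]] by simp
    ultimately show False by simp
  qed
  then obtain a b where ab: "a \<noteq> b" "x a = x b" unfolding inj_on_def by auto
  have ex: "\<exists>j. \<exists>i<j. x i = x j"
  proof (cases "a < b")
    case True
    then show ?thesis using ab by (intro exI[of _ b] exI[of _ a]) simp
  next
    case False
    then have "b < a" using ab by simp
    then show ?thesis using ab by (intro exI[of _ a] exI[of _ b]) simp
  qed
  define j where "j = (LEAST j. \<exists>i<j. x i = x j)"
  obtain i where i: "i < j" "x i = x j"
    using LeastI_ex[OF ex] unfolding j_def[symmetric] by blast
  have "inj_on x {i..<j}"
  proof (rule inj_onI, rule ccontr)
    fix a b assume a: "a \<in> {i..<j}" and b: "b \<in> {i..<j}" and "x a = x b" "a \<noteq> b"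
    then have "min a b < max a b" "x (min a b) = x (max a b)" by (auto simp: min_def max_def)
    then have "j \<le> max a b" unfolding j_def by (intro Least_le) blast
    with a b show False by auto
  qed
  with i show ?thesis by blast
qed

text \<open>A non-backtracking walk must revisit a vertex; its first return closes a cycle, which
  has length at least 3 because the walk neither stays put nor turns back.\<close>

lemma cycle_of_non_backtracking_walk:
  assumes g: "is_graph n E" and adj: "\<And>l. E (x l) (x (Suc l))"
    and nb: "\<And>l. x (Suc (Suc l)) \<noteq> x l"
  shows "\<exists>cs. is_cycle E cs"
proof -
  obtain i j where ij: "i < j" "x i = x j" and inj: "inj_on x {i..<j}"
    using exists_first_repetition[of x n] adj is_graphD(1)[OF g] by blast
  define cs where "cs = map x [i..<j]"
  have len: "length cs = j - i" and nth: "\<And>m. m < j - i \<Longrightarrow> cs ! m = x (i + m)"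
    by (simp_all add: cs_def)
  have "j \<noteq> Suc i" using ij is_graphD(3)[OF g adj[of i]] by auto
  moreover have "j \<noteq> Suc (Suc i)" using ij nb[of i] by auto
  ultimately have len3: "length cs \<ge> 3" using ij len by linarith
  have "distinct cs" using inj by (simp add: cs_def distinct_map)
  moreover have "\<forall>m. Suc m < length cs \<longrightarrow> E (cs ! m) (cs ! Suc m)"
    using nth adj len by auto
  moreover have "last cs = x (j - 1)"
  proof -
    have "i + (j - i - 1) = j - 1" using ij by linarith
    moreover have "cs \<noteq> []" using len3 by auto
    ultimately show ?thesis using len len3 nth[of "j - i - 1"] by (simp add: last_conv_nth)
  qed
  moreover have "hd cs = x j"
    using len3 len nth[of 0] ij by (subst hd_conv_nth) auto
  moreover have "E (x (j - 1)) (x j)" using adj[of "j - 1"] ij by simp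
  ultimately have "is_cycle E cs" using len3 unfolding is_cycle_def by simp
  then show ?thesis ..
qed

section \<open>The oriented edge matrix\<close>

definition oriented_edge_set :: "nat \<Rightarrow> (nat \<Rightarrow> nat \<Rightarrow> bool) \<Rightarrow> (nat \<times> nat) set" where
  "oriented_edge_set n E = {(u, v). u < n \<and> v < n \<and> E u v}"

lemma finite_oriented_edge_set: "finite (oriented_edge_set n E)"
  by (rule finite_subset[of _ "{..<n} \<times> {..<n}"]) (auto simp: oriented_edge_set_def)

lemma set_oriented_edges: "set (oriented_edges n E) = oriented_edge_set n E"
  and distinct_oriented_edges: "distinct (oriented_edges n E)"
  and length_oriented_edges: "length (oriented_edges n E) = card (oriented_edge_set n E)"
  using finite_oriented_edge_set[of n E]
  unfolding oriented_edges_def oriented_edge_set_def[symmetric] by auto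

lemma oriented_edges_nth_in:
  "i < length (oriented_edges n E) \<Longrightarrow> oriented_edges n E ! i \<in> oriented_edge_set n E"
  using nth_mem set_oriented_edges by blast

lemma oriented_edges_index:
  assumes "u < n" "v < n" "E u v"
  obtains i where "i < length (oriented_edges n E)" "oriented_edges n E ! i = (u, v)"
  using assms set_oriented_edges[of n E]
  by (metis (no_types, lifting) case_prodI in_set_conv_nth mem_Collect_eq oriented_edge_set_def)

lemma oriented_edge_matrix_carrier:
  "oriented_edge_matrix n E \<in> carrier_mat (length (oriented_edges n E)) (length (oriented_edges n E))"
  unfolding oriented_edge_matrix_def Let_def by simp

definition non_backtracking :: "nat \<times> nat \<Rightarrow> nat \<times> nat \<Rightarrow> bool" where
  "non_backtracking e e' \<longleftrightarrow> snd e = fst e' \<and> fst e \<noteq> snd e'"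

lemma oriented_edge_matrix_entry:
  assumes "i < length (oriented_edges n E)" "j < length (oriented_edges n E)"
  shows "oriented_edge_matrix n E $$ (i,j) =
    of_bool (non_backtracking (oriented_edges n E ! i) (oriented_edges n E ! j))"
  using assms unfolding oriented_edge_matrix_def Let_def non_backtracking_def by simp

lemma oriented_edge_matrix_nonneg:
  "i < length (oriented_edges n E) \<Longrightarrow> j < length (oriented_edges n E) \<Longrightarrow>
   oriented_edge_matrix n E $$ (i,j) \<ge> 0"
  by (simp add: oriented_edge_matrix_entry)

lemma trace_oriented_edge_matrix_pow_pos_iff:
  "trace (oriented_edge_matrix n E ^\<^sub>m p) > 0 \<longleftrightarrow>
   (\<exists>i<length (oriented_edges n E). \<exists>f. f 0 = i \<and> f p = i \<and>
      positive_walk (oriented_edge_matrix n E) p f)"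
  by (rule nonneg_mat_trace_pow_pos_iff[OF oriented_edge_matrix_carrier oriented_edge_matrix_nonneg])

lemma trace_oriented_edge_matrix_pow_nonneg: "trace (oriented_edge_matrix n E ^\<^sub>m p) \<ge> 0"
  by (rule nonneg_mat_trace_pow_nonneg[OF oriented_edge_matrix_carrier oriented_edge_matrix_nonneg])

lemma positive_walk_oriented_edge_matrix:
  "positive_walk (oriented_edge_matrix n E) p f \<longleftrightarrow>
   (\<forall>l\<le>p. f l < length (oriented_edges n E)) \<and>
   (\<forall>l<p. non_backtracking (oriented_edges n E ! f l) (oriented_edges n E ! f (Suc l)))"
  using oriented_edge_matrix_carrier[of n E]
  by (auto simp: positive_walk_def oriented_edge_matrix_entry)

lemma closed_positive_walk_periodic:
  assumes "positive_walk A p f" "f 0 = f p" "p > 0"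
  shows "f (l mod p) < dim_row A" "A $$ (f (l mod p), f (Suc l mod p)) > 0"
proof -
  show "f (l mod p) < dim_row A" using assms by (simp add: positive_walk_def)
  have step: "\<forall>l<p. A $$ (f l, f (Suc l)) > 0" using assms(1) by (simp add: positive_walk_def)
  show "A $$ (f (l mod p), f (Suc l mod p)) > 0"
  proof (cases "Suc (l mod p) = p")
    case True
    then have "Suc l mod p = 0" "l mod p = p - 1" "Suc (p - 1) = p" by (simp_all add: mod_Suc)
    then show ?thesis using step[rule_format, of "p - 1"] assms(2,3) by simp
  next
    case False
    then have "Suc l mod p = Suc (l mod p)" by (simp add: mod_Suc)
    then show ?thesis using step[rule_format, of "l mod p"] assms(3) by simp
  qed
qed

text \<open>Closed non-backtracking walks of positive length exist only in graphs with a cycle.\<close>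

lemma forest_trace_oriented_edge_matrix_pow:
  assumes F: "is_forest n E" and p: "p > 0"
  shows "trace (oriented_edge_matrix n E ^\<^sub>m p) = 0"
proof (rule ccontr)
  let ?es = "oriented_edges n E"
  assume "trace (oriented_edge_matrix n E ^\<^sub>m p) \<noteq> 0"
  then have "trace (oriented_edge_matrix n E ^\<^sub>m p) > 0"
    using trace_oriented_edge_matrix_pow_nonneg[of n E p] by simp
  then obtain i where "\<exists>f. f 0 = i \<and> f p = i \<and> positive_walk (oriented_edge_matrix n E) p f"
    unfolding trace_oriented_edge_matrix_pow_pos_iff by blast
  then obtain f where f: "positive_walk (oriented_edge_matrix n E) p f" "f 0 = f p" by auto
  define x where "x l = fst (?es ! f (l mod p))" for l
  have h: "f (l mod p) < length ?es"
    "non_backtracking (?es ! f (l mod p)) (?es ! f (Suc l mod p))" for l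
    using closed_positive_walk_periodic[OF f p, of l] closed_positive_walk_periodic(1)[OF f p, of "Suc l"]
      oriented_edge_matrix_carrier[of n E]
      oriented_edge_matrix_entry[of "f (l mod p)" n E "f (Suc l mod p)"]
    by (auto simp: mod_less_divisor[OF p])
  have "?es ! f (l mod p) = (x l, x (Suc l))" for l
    using h(2)[of l] unfolding x_def non_backtracking_def by (metis prod.collapse)
  then have "E (x l) (x (Suc l))" for l
    using oriented_edges_nth_in[OF h(1)[of l]] by (simp add: oriented_edge_set_def)
  moreover have "x (Suc (Suc l)) \<noteq> x l" for l
    using h(2)[of l] h(2)[of "Suc l"] unfolding x_def non_backtracking_def by simp
  ultimately show False
    using cycle_of_non_backtracking_walk F unfolding is_forest_def by blast
qed

lemma cycle_non_backtracking_walk: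
  assumes c: "is_cycle E cs"
  shows "E (cs ! (l mod length cs)) (cs ! (Suc l mod length cs))"
    and "cs ! (l mod length cs) \<noteq> cs ! (Suc (Suc l) mod length cs)"
proof -
  define L where "L = length cs"
  have L3: "L \<ge> 3" and dist: "distinct cs" and st: "\<forall>i. Suc i < L \<longrightarrow> E (cs ! i) (cs ! Suc i)"
    and lh: "E (last cs) (hd cs)" using c unfolding is_cycle_def L_def by auto
  show "E (cs ! (l mod length cs)) (cs ! (Suc l mod length cs))"
    unfolding L_def[symmetric]
  proof (cases "Suc (l mod L) = L")
    case True
    then have "Suc l mod L = 0" "l mod L = L - 1" by (simp_all add: mod_Suc)
    moreover have "cs \<noteq> []" using L3 unfolding L_def by auto
    then have "last cs = cs ! (L - 1)" "hd cs = cs ! 0"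
      unfolding L_def by (simp_all add: last_conv_nth hd_conv_nth)
    ultimately show "E (cs ! (l mod L)) (cs ! (Suc l mod L))" using lh by simp
  next
    case False
    moreover have "l mod L < L" using L3 by simp
    ultimately have "Suc l mod L = Suc (l mod L)" "Suc (l mod L) < L" by (simp_all add: mod_Suc)
    then show "E (cs ! (l mod L)) (cs ! (Suc l mod L))" using st by simp
  qed
  show "cs ! (l mod length cs) \<noteq> cs ! (Suc (Suc l) mod length cs)"
    unfolding L_def[symmetric]
  proof
    assume "cs ! (l mod L) = cs ! (Suc (Suc l) mod L)"
    moreover have "0 < length cs" using L3 unfolding L_def by linarith
    then have "Suc (Suc l) mod L < length cs" "l mod L < length cs"
      unfolding L_def by simp_all
    ultimately have "l mod L = Suc (Suc l) mod L"
      using nth_eq_iff_index_eq[OF dist] by blast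
    then have "L dvd 2" using mod_eq_dvd_iff_nat[of l "Suc (Suc l)" L] by simp
    with L3 show False by (auto dest: dvd_imp_le)
  qed
qed

lemma closed_non_backtracking_walk_trace_pos:
  assumes g: "is_graph n E" and adj: "\<And>l. E (x l) (x (Suc l))"
    and nb: "\<And>l. x l \<noteq> x (Suc (Suc l))" and closed: "x L = x 0" "x (Suc L) = x (Suc 0)"
  shows "trace (oriented_edge_matrix n E ^\<^sub>m L) > 0"
proof -
  let ?es = "oriented_edges n E"
  have "\<forall>l. \<exists>i. i < length ?es \<and> ?es ! i = (x l, x (Suc l))"
  proof
    fix l
    show "\<exists>i. i < length ?es \<and> ?es ! i = (x l, x (Suc l))"
      using oriented_edges_index[of "x l" n "x (Suc l)" E, OF is_graphD(1,2)[OF g adj[of l]] adj[of l]]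
      by blast
  qed
  from choice[OF this] obtain f where "\<forall>l. f l < length ?es \<and> ?es ! f l = (x l, x (Suc l))" ..
  then have f: "\<And>l. f l < length ?es" "\<And>l. ?es ! f l = (x l, x (Suc l))" by auto
  have "?es ! f L = ?es ! f 0" using f(2)[of L] f(2)[of 0] closed by simp
  then have "f L = f 0" using nth_eq_iff_index_eq[OF distinct_oriented_edges f(1) f(1)] by simp
  moreover have "positive_walk (oriented_edge_matrix n E) L f"
    unfolding positive_walk_oriented_edge_matrix non_backtracking_def using f nb by simp
  ultimately show ?thesis
    unfolding trace_oriented_edge_matrix_pow_pos_iff using f(1)[of 0]
    by (intro exI[of _ "f 0"] conjI exI[of _ f]) simp_all
qed

lemma cycle_trace_oriented_edge_matrix_pow:
  assumes g: "is_graph n E" and c: "is_cycle E cs"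
  shows "trace (oriented_edge_matrix n E ^\<^sub>m length cs) > 0"
  by (rule closed_non_backtracking_walk_trace_pos[where x = "\<lambda>l. cs ! (l mod length cs)",
        OF g cycle_non_backtracking_walk[OF c]]) (simp_all add: mod_Suc)

section \<open>Triangles and degrees\<close>

definition triangle_count :: "nat \<Rightarrow> (nat \<Rightarrow> nat \<Rightarrow> bool) \<Rightarrow> nat" where
  "triangle_count n E = card {(a,b,c). a < n \<and> b < n \<and> c < n \<and> E a b \<and> E b c \<and> E c a}"

definition degree_sum :: "nat \<Rightarrow> (nat \<Rightarrow> nat \<Rightarrow> bool) \<Rightarrow> int" where
  "degree_sum n E = (\<Sum>a<n. int (degree n E a))"

definition two_path_count :: "nat \<Rightarrow> (nat \<Rightarrow> nat \<Rightarrow> bool) \<Rightarrow> int" where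
  "two_path_count n E = (\<Sum>a<n. int (degree n E a) * (int (degree n E a) - 1))"

lemma sum3_of_bool_eq_card:
  fixes m :: nat
  shows "(\<Sum>a<m. \<Sum>b<m. \<Sum>c<m. of_bool (P a b c)) =
   int (card {(a,b,c). a < m \<and> b < m \<and> c < m \<and> P a b c})"
proof -
  have "(\<Sum>a<m. \<Sum>b<m. \<Sum>c<m. of_bool (P a b c)) =
      (\<Sum>(a,b,c)\<in>{..<m} \<times> {..<m} \<times> {..<m}. (of_bool (P a b c) :: int))"
    by (simp add: sum.cartesian_product del: sum_of_bool_eq)
  also have "\<dots> = int (card (({..<m} \<times> {..<m} \<times> {..<m}) \<inter> {(a,b,c). P a b c}))"
    by (subst sum_of_bool_eq[symmetric]) (auto intro!: sum.cong simp: split_beta)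
  also have "({..<m} \<times> {..<m} \<times> {..<m}) \<inter> {(a,b,c). P a b c} =
      {(a,b,c). a < m \<and> b < m \<and> c < m \<and> P a b c}" by auto
  finally show ?thesis .
qed

lemma triangle_count_eq_sum:
  "int (triangle_count n E) = (\<Sum>a<n. \<Sum>b<n. \<Sum>c<n. of_bool (E a b \<and> E b c \<and> E c a))"
  unfolding triangle_count_def by (rule sum3_of_bool_eq_card[symmetric])

lemma sum_of_bool_lessThan: "(\<Sum>c<n. of_bool (P c)) = int (card {c. c < (n::nat) \<and> P c})"
proof -
  have "{..<n} \<inter> {c. P c} = {c. c < n \<and> P c}" by auto
  then show ?thesis by simp
qed

lemma int_degree_eq_sum: "int (degree n E a) = (\<Sum>c<n. of_bool (E a c))"
  by (simp only: sum_of_bool_lessThan degree_def)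

lemma card_oriented_edge_set: "int (card (oriented_edge_set n E)) = degree_sum n E"
proof -
  have "degree_sum n E = (\<Sum>(a,b)\<in>{..<n} \<times> {..<n}. of_bool (E a b))"
    unfolding degree_sum_def int_degree_eq_sum by (rule sum.cartesian_product)
  also have "\<dots> = int (card (({..<n} \<times> {..<n}) \<inter> {(a,b). E a b}))"
    by (subst sum_of_bool_eq[symmetric]) (auto intro!: sum.cong simp: split_beta)
  also have "({..<n} \<times> {..<n}) \<inter> {(a,b). E a b} = oriented_edge_set n E"
    unfolding oriented_edge_set_def by auto
  finally show ?thesis by simp
qed

lemma trace_pow3:
  fixes A :: "'a::comm_ring_1 mat"
  assumes A: "A \<in> carrier_mat k k"
  shows "trace (A ^\<^sub>m 3) = (\<Sum>i<k. \<Sum>j<k. \<Sum>l<k. A $$ (i,j) * A $$ (j,l) * A $$ (l,i))"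
proof -
  have "A ^\<^sub>m 3 = A * A * A" using A by (simp add: numeral_3_eq_3)
  moreover have "(A * A * A) $$ (i,i) = (\<Sum>j<k. \<Sum>l<k. A $$ (i,j) * A $$ (j,l) * A $$ (l,i))"
    if "i < k" for i
    using A that by (simp add: scalar_prod_def atLeast0LessThan sum_distrib_left mult.assoc)
  ultimately show ?thesis using A by (simp add: trace_def)
qed

lemma closed_3walks_bij_triangles:
  assumes g: "is_graph n E"
  defines "es \<equiv> oriented_edges n E"
  shows "bij_betw (\<lambda>(i,j,l). (fst (es!i), fst (es!j), fst (es!l)))
    {(i,j,l). i < length es \<and> j < length es \<and> l < length es \<and>
      non_backtracking (es!i) (es!j) \<and> non_backtracking (es!j) (es!l) \<and> non_backtracking (es!l) (es!i)}
    {(a,b,c). a < n \<and> b < n \<and> c < n \<and> E a b \<and> E b c \<and> E c a}"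
    (is "bij_betw ?start ?W ?T")
proof (rule bij_betwI')
  fix x y assume x: "x \<in> ?W" and y: "y \<in> ?W"
  obtain i j l where xe: "x = (i,j,l)" by (cases x) auto
  obtain i' j' l' where ye: "y = (i',j',l')" by (cases y) auto
  show "(?start x = ?start y) = (x = y)"
  proof
    assume "?start x = ?start y"
    then have "es ! i = es ! i'" "es ! j = es ! j'" "es ! l = es ! l'"
      using x y unfolding xe ye non_backtracking_def by (auto simp: prod_eq_iff)
    then show "x = y"
      using x y nth_eq_iff_index_eq[OF distinct_oriented_edges] unfolding xe ye es_def by auto
  qed simp
next
  fix x assume x: "x \<in> ?W"
  obtain i j l where xe: "x = (i,j,l)" by (cases x) auto
  have "es ! i \<in> oriented_edge_set n E" "es ! j \<in> oriented_edge_set n E"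
    "es ! l \<in> oriented_edge_set n E"
    using x oriented_edges_nth_in unfolding xe es_def by auto
  then show "?start x \<in> ?T"
    using x unfolding xe non_backtracking_def oriented_edge_set_def by (auto simp: split_beta)
next
  fix y assume "y \<in> ?T"
  then obtain a b c where y: "y = (a,b,c)" "a < n" "b < n" "c < n" "E a b" "E b c" "E c a"
    by auto
  obtain i where "i < length es" "es ! i = (a,b)"
    unfolding es_def by (rule oriented_edges_index[of a n b E]) (use y in auto)
  moreover obtain j where "j < length es" "es ! j = (b,c)"
    unfolding es_def by (rule oriented_edges_index[of b n c E]) (use y in auto)
  moreover obtain l where "l < length es" "es ! l = (c,a)"
    unfolding es_def by (rule oriented_edges_index[of c n a E]) (use y in auto)
  moreover have "a \<noteq> b" "b \<noteq> c" "c \<noteq> a" using y is_graphD(3)[OF g] by blast+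
  ultimately show "\<exists>x\<in>?W. y = ?start x"
    unfolding non_backtracking_def using y by (intro bexI[of _ "(i,j,l)"]) auto
qed

lemma trace_oriented_edge_matrix_pow3:
  assumes g: "is_graph n E"
  shows "trace (oriented_edge_matrix n E ^\<^sub>m 3) = int (triangle_count n E)"
proof -
  let ?es = "oriented_edges n E"
  let ?k = "length ?es"
  have "trace (oriented_edge_matrix n E ^\<^sub>m 3) = (\<Sum>i<?k. \<Sum>j<?k. \<Sum>l<?k.
      of_bool (non_backtracking (?es!i) (?es!j) \<and> non_backtracking (?es!j) (?es!l) \<and>
        non_backtracking (?es!l) (?es!i)))"
    unfolding trace_pow3[OF oriented_edge_matrix_carrier]
    by (intro sum.cong refl) (simp add: oriented_edge_matrix_entry)
  also have "\<dots> = int (card {(i,j,l). i < ?k \<and> j < ?k \<and> l < ?k \<and> non_backtracking (?es!i) (?es!j) \<and>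
      non_backtracking (?es!j) (?es!l) \<and> non_backtracking (?es!l) (?es!i)})"
    by (rule sum3_of_bool_eq_card)
  also have "\<dots> = int (triangle_count n E)"
    unfolding triangle_count_def using bij_betw_same_card[OF closed_3walks_bij_triangles[OF g]] by simp
  finally show ?thesis .
qed

lemma compl_graph_is_graph: "is_graph n E \<Longrightarrow> is_graph n (compl_graph n E)"
  unfolding is_graph_def compl_graph_def by auto

lemma sum3_rotate:
  "(\<Sum>a<n::nat. \<Sum>b<n. \<Sum>c<n. g a b c) = (\<Sum>a<n. \<Sum>b<n. \<Sum>c<n. (g c a b :: int))"
proof -
  have "(\<Sum>a<n. \<Sum>b<n. \<Sum>c<n. g c a b) = (\<Sum>a<n. \<Sum>c<n. \<Sum>b<n. g c a b)"
    by (rule sum.cong[OF refl], rule sum.swap)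
  also have "\<dots> = (\<Sum>c<n. \<Sum>a<n. \<Sum>b<n. g c a b)" by (rule sum.swap)
  finally show ?thesis by simp
qed

lemma sum_distinct_from_two:
  assumes "a < n" "b < n" "a \<noteq> b"
  shows "(\<Sum>c<n. of_bool (b \<noteq> c) * of_bool (c \<noteq> a)) = int n - 2"
proof -
  have "(\<Sum>c<n. of_bool (b \<noteq> c) * of_bool (c \<noteq> a)) = (\<Sum>c<n. (of_bool (c \<notin> {a,b}) :: int))"
    by (intro sum.cong refl) auto
  also have "\<dots> = int (card ({..<n} - {a,b}))"
    unfolding sum_of_bool_lessThan by (rule arg_cong[where f = "\<lambda>S. int (card S)"]) auto
  also have "card ({..<n} - {a,b}) = n - 2" using assms by (subst card_Diff_subset) auto
  finally show ?thesis using assms by simp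
qed

lemma sum_distinct_triples:
  "(\<Sum>a<n. \<Sum>b<n. \<Sum>c<n. of_bool (a \<noteq> b) * of_bool (b \<noteq> c) * of_bool (c \<noteq> a)) =
   int n * (int n - 1) * (int n - 2)"
proof -
  have "(\<Sum>b<n. \<Sum>c<n. of_bool (a \<noteq> b) * of_bool (b \<noteq> c) * of_bool (c \<noteq> a)) =
      (int n - 1) * (int n - 2)" if a: "a < n" for a
  proof -
    have "(\<Sum>b<n. \<Sum>c<n. of_bool (a \<noteq> b) * of_bool (b \<noteq> c) * of_bool (c \<noteq> a)) =
        (\<Sum>b<n. of_bool (a \<noteq> b) * (int n - 2))"
      using a sum_distinct_from_two[OF a] by (intro sum.cong refl) (auto simp: sum_distrib_left mult.assoc)
    also have "\<dots> = (int n - 2) * (\<Sum>b<n. of_bool (b \<noteq> a))"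
      by (simp add: sum_distrib_left mult.commute eq_commute[of a] del: sum_of_bool_eq)
    also have "(\<Sum>b<n. of_bool (b \<noteq> a)) = int (card ({..<n} - {a}))"
      unfolding sum_of_bool_lessThan by (rule arg_cong[where f = "\<lambda>S. int (card S)"]) auto
    finally show ?thesis using a by (simp add: of_nat_diff)
  qed
  then show ?thesis by simp
qed

lemma sum_edge_distinct_triples:
  assumes g: "is_graph n F"
  shows "(\<Sum>a<n. \<Sum>b<n. \<Sum>c<n. of_bool (F a b) * of_bool (b \<noteq> c) * of_bool (c \<noteq> a)) =
    (int n - 2) * degree_sum n F"
proof -
  have "(\<Sum>c<n. of_bool (F a b) * of_bool (b \<noteq> c) * of_bool (c \<noteq> a)) =
      of_bool (F a b) * (int n - 2)" if "a < n" "b < n" for a b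
    using sum_distinct_from_two[OF that] is_graphD(3)[OF g, of a b]
    by (cases "F a b") (simp_all add: mult.assoc)
  then have "(\<Sum>a<n. \<Sum>b<n. \<Sum>c<n. of_bool (F a b) * of_bool (b \<noteq> c) * of_bool (c \<noteq> a)) =
      (\<Sum>a<n. \<Sum>b<n. of_bool (F a b) * (int n - 2))" by simp
  also have "\<dots> = (int n - 2) * degree_sum n F"
    by (simp add: degree_sum_def int_degree_eq_sum sum_distrib_left sum_distrib_right mult.commute)
  finally show ?thesis .
qed

lemma sum_two_edge_distinct_triples:
  assumes g: "is_graph n F"
  shows "(\<Sum>a<n. \<Sum>b<n. \<Sum>c<n. of_bool (F a b) * of_bool (F b c) * of_bool (c \<noteq> a)) =
    two_path_count n F"
proof -
  have "(\<Sum>c<n. of_bool (F a b) * of_bool (F b c) * of_bool (c \<noteq> a)) =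
      of_bool (F a b) * (int (degree n F b) - 1)" if "a < n" "b < n" for a b
  proof (cases "F a b")
    case True
    have "of_bool (F b c) * of_bool (c \<noteq> a) = of_bool (F b c) - of_bool (F b c) * (of_bool (c = a) :: int)"
      for c by simp
    then have "(\<Sum>c<n. of_bool (F b c) * of_bool (c \<noteq> a)) =
        (\<Sum>c<n. of_bool (F b c)) - (\<Sum>c<n. of_bool (F b c) * (of_bool (c = a) :: int))"
      by (simp only: sum_subtractf)
    also have "(\<Sum>c<n. of_bool (F b c) * (of_bool (c = a) :: int)) = (\<Sum>c<n. if c = a then 1 else 0)"
      using is_graphD(4)[OF g True] by (intro sum.cong) auto
    also have "\<dots> = 1" using that by simp
    finally show ?thesis using True by (simp add: int_degree_eq_sum mult.assoc)
  qed simp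
  then have "(\<Sum>a<n. \<Sum>b<n. \<Sum>c<n. of_bool (F a b) * of_bool (F b c) * of_bool (c \<noteq> a)) =
      (\<Sum>b<n. \<Sum>a<n. of_bool (F b a) * (int (degree n F b) - 1))"
    using is_graphD(4)[OF g] by (subst sum.swap) (auto intro!: sum.cong)
  also have "\<dots> = two_path_count n F"
    by (simp add: two_path_count_def int_degree_eq_sum sum_distrib_right)
  finally show ?thesis .
qed

text \<open>Expand the indicator of a complement edge as \<open>[a \<noteq> b] - [F a b]\<close> in each factor of the
  triangle sum; by cyclic symmetry only four distinct sums remain.\<close>

lemma triangle_count_compl_graph:
  assumes g: "is_graph n F"
  shows "int (triangle_count n (compl_graph n F)) = int n * (int n - 1) * (int n - 2)
    - 3 * (int n - 2) * degree_sum n F + 3 * two_path_count n F - int (triangle_count n F)"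
proof -
  define X where "X a b = (of_bool (a \<noteq> b) :: int)" for a b :: nat
  define Y where "Y a b = (of_bool (F a b) :: int)" for a b
  let ?S = "\<lambda>h. (\<Sum>a<n. \<Sum>b<n. \<Sum>c<n. (h a b c :: int))"
  have "of_bool (compl_graph n F a b) = X a b - Y a b" if "a < n" "b < n" for a b
    using that is_graphD(3)[OF g] unfolding X_def Y_def compl_graph_def by auto
  then have "int (triangle_count n (compl_graph n F)) =
      ?S (\<lambda>a b c. (X a b - Y a b) * (X b c - Y b c) * (X c a - Y c a))"
    unfolding triangle_count_eq_sum by (simp add: of_bool_conj mult.assoc)
  also have "\<dots> = ?S (\<lambda>a b c. X a b * X b c * X c a)
      - ?S (\<lambda>a b c. Y a b * X b c * X c a) - ?S (\<lambda>a b c. X a b * Y b c * X c a)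
      - ?S (\<lambda>a b c. X a b * X b c * Y c a) + ?S (\<lambda>a b c. Y a b * Y b c * X c a)
      + ?S (\<lambda>a b c. X a b * Y b c * Y c a) + ?S (\<lambda>a b c. Y a b * X b c * Y c a)
      - ?S (\<lambda>a b c. Y a b * Y b c * Y c a)"
    by (simp add: sum.distrib sum_subtractf algebra_simps)
  also have "?S (\<lambda>a b c. X a b * Y b c * X c a) = ?S (\<lambda>a b c. Y a b * X b c * X c a)"
    by (subst sum3_rotate) (simp add: mult_ac)
  also have "?S (\<lambda>a b c. X a b * X b c * Y c a) = ?S (\<lambda>a b c. Y a b * X b c * X c a)"
    by (subst (2) sum3_rotate) (simp add: mult_ac)
  also have "?S (\<lambda>a b c. X a b * Y b c * Y c a) = ?S (\<lambda>a b c. Y a b * Y b c * X c a)"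
    by (subst sum3_rotate) (simp add: mult_ac)
  also have "?S (\<lambda>a b c. Y a b * X b c * Y c a) = ?S (\<lambda>a b c. Y a b * Y b c * X c a)"
    by (subst (2) sum3_rotate) (simp add: mult_ac)
  also have "?S (\<lambda>a b c. X a b * X b c * X c a) = int n * (int n - 1) * (int n - 2)"
    unfolding X_def by (rule sum_distinct_triples)
  also have "?S (\<lambda>a b c. Y a b * X b c * X c a) = (int n - 2) * degree_sum n F"
    unfolding X_def Y_def by (rule sum_edge_distinct_triples[OF g])
  also have "?S (\<lambda>a b c. Y a b * Y b c * X c a) = two_path_count n F"
    unfolding X_def Y_def by (rule sum_two_edge_distinct_triples[OF g])
  also have "?S (\<lambda>a b c. Y a b * Y b c * Y c a) = int (triangle_count n F)"
    unfolding Y_def triangle_count_eq_sum by (simp add: of_bool_conj mult.assoc)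
  finally show ?thesis by (simp add: algebra_simps)
qed

lemma phi_T_eq_imp_trace_pow_eq:
  "phi_T n G' = phi_T n G \<Longrightarrow>
   trace (oriented_edge_matrix n G' ^\<^sub>m p) = trace (oriented_edge_matrix n G ^\<^sub>m p)"
  unfolding phi_T_def
  by (rule char_poly_eq_imp_trace_pow_eq[OF oriented_edge_matrix_carrier oriented_edge_matrix_carrier])

lemma phi_T_eq_imp_degree_sum_eq:
  assumes "phi_T n G' = phi_T n G"
  shows "degree_sum n G' = degree_sum n G"
proof -
  have "length (oriented_edges n G') = length (oriented_edges n G)"
    using assms unfolding phi_T_def
    by (rule char_poly_eq_imp_dim_eq[OF oriented_edge_matrix_carrier oriented_edge_matrix_carrier])
  then show ?thesis by (simp add: length_oriented_edges flip: card_oriented_edge_set)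
qed

lemma phi_T_eq_forest_imp_forest:
  assumes F: "is_forest n G" and g': "is_graph n G'" and p: "phi_T n G' = phi_T n G"
  shows "is_forest n G'"
  unfolding is_forest_def
proof (intro conjI g' notI)
  assume "\<exists>cs. is_cycle G' cs"
  then obtain cs where cs: "is_cycle G' cs" ..
  then have "3 \<le> length cs" by (simp add: is_cycle_def)
  then have pos: "length cs > 0" by linarith
  have "0 < trace (oriented_edge_matrix n G' ^\<^sub>m length cs)"
    by (rule cycle_trace_oriented_edge_matrix_pow[OF g' cs])
  also have "\<dots> = trace (oriented_edge_matrix n G ^\<^sub>m length cs)"
    by (rule phi_T_eq_imp_trace_pow_eq[OF p])
  also have "\<dots> = 0" by (rule forest_trace_oriented_edge_matrix_pow[OF F pos])
  finally show False by simp
qed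

lemma phi_T_eq_imp_triangle_count_eq:
  assumes "is_graph n G" "is_graph n G'" "phi_T n G' = phi_T n G"
  shows "triangle_count n G' = triangle_count n G"
proof -
  have "int (triangle_count n G') = trace (oriented_edge_matrix n G' ^\<^sub>m 3)"
    by (rule trace_oriented_edge_matrix_pow3[OF assms(2), symmetric])
  also have "\<dots> = trace (oriented_edge_matrix n G ^\<^sub>m 3)"
    by (rule phi_T_eq_imp_trace_pow_eq[OF assms(3)])
  also have "\<dots> = int (triangle_count n G)"
    by (rule trace_oriented_edge_matrix_pow3[OF assms(1)])
  finally show ?thesis by simp
qed

lemma forest_triangle_count:
  assumes "is_forest n E"
  shows "triangle_count n E = 0"
proof -
  have empty: "{(a,b,c). a < n \<and> b < n \<and> c < n \<and> E a b \<and> E b c \<and> E c a} = {}"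
  proof (rule equals0I)
    fix t assume "t \<in> {(a,b,c). a < n \<and> b < n \<and> c < n \<and> E a b \<and> E b c \<and> E c a}"
    then obtain a b c where "E a b" "E b c" "E c a" by auto
    then show False using forest_no_triangle[OF assms] by blast
  qed
  show ?thesis unfolding triangle_count_def empty by simp
qed

text \<open>The triangles of the complement are counted by the degree sums and the triangles of the
  graph itself, and a forest has no triangles.\<close>

lemma phi_T_pair_eq_forest_invariants:
  assumes F: "is_forest n G" and g': "is_graph n G'"
    and p1: "phi_T n G' = phi_T n G"
    and p2: "phi_T n (compl_graph n G') = phi_T n (compl_graph n G)"
  shows "is_forest n G'" "degree_sum n G' = degree_sum n G"
    "two_path_count n G' = two_path_count n G"
proof -
  have g: "is_graph n G" using F by (simp add: is_forest_def)
  show F': "is_forest n G'" by (rule phi_T_eq_forest_imp_forest[OF F g' p1])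
  show D: "degree_sum n G' = degree_sum n G" by (rule phi_T_eq_imp_degree_sum_eq[OF p1])
  have "triangle_count n (compl_graph n G') = triangle_count n (compl_graph n G)"
    by (rule phi_T_eq_imp_triangle_count_eq[OF compl_graph_is_graph[OF g] compl_graph_is_graph[OF g'] p2])
  then show "two_path_count n G' = two_path_count n G"
    using triangle_count_compl_graph[OF g] triangle_count_compl_graph[OF g'] D
      forest_triangle_count[OF F] forest_triangle_count[OF F'] by simp
qed

definition dominates_all_but :: "nat \<Rightarrow> (nat \<Rightarrow> nat \<Rightarrow> bool) \<Rightarrow> nat \<Rightarrow> nat \<Rightarrow> bool" where
  "dominates_all_but n E v w \<longleftrightarrow> (\<forall>u<n. u \<noteq> v \<longrightarrow> u \<noteq> w \<longrightarrow> E v u)"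

lemma compl_degree_less_2_imp_dominates_all_but:
  assumes v: "v < n" and d: "degree n (compl_graph n G) v < 2"
  shows "\<exists>w<n. dominates_all_but n G v w"
proof -
  define S where "S = {u. u < n \<and> compl_graph n G v u}"
  have "card S \<le> Suc 0" using d unfolding degree_def S_def by simp
  then have one: "\<forall>x\<in>S. \<forall>y\<in>S. x = y" by (subst card_le_Suc0_iff_eq[symmetric]) (auto simp: S_def)
  have dom: "dominates_all_but n G v w" if "S \<subseteq> {w}" for w
    using that v unfolding dominates_all_but_def S_def compl_graph_def by auto
  show ?thesis
  proof (cases "S = {}")
    case True
    then show ?thesis using dom[of v] v by blast
  next
    case False
    then obtain w where "w \<in> S" by blast
    then have "S \<subseteq> {w}" "w < n" using one unfolding S_def by auto
    then show ?thesis using dom by blast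
  qed
qed

text \<open>If the complement is disconnected, the graph contains all edges between a component
  \<open>A\<close> of the complement and the rest; without a 4-cycle one side must be a single vertex.\<close>

lemma forest_compl_disconnected_imp_dominates_all_but:
  assumes F: "is_forest n G" and nc: "\<not> graph_connected n (compl_graph n G)"
  shows "\<exists>v<n. dominates_all_but n G v v"
proof -
  obtain u v where u: "u < n" and v: "v < n" and nr: "\<not> (compl_graph n G)\<^sup>*\<^sup>* u v"
    using nc unfolding graph_connected_def by blast
  define A where "A = {x. x < n \<and> (compl_graph n G)\<^sup>*\<^sup>* u x}"
  have uA: "u \<in> A" and vA: "v \<notin> A" using u nr unfolding A_def by auto
  have cross: "G x y" if "x \<in> A" "y < n" "y \<notin> A" for x y
  proof (rule ccontr)
    assume "\<not> G x y"
    moreover have "x \<noteq> y" using that by auto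
    ultimately have "compl_graph n G x y" using that unfolding compl_graph_def A_def by auto
    then have "(compl_graph n G)\<^sup>*\<^sup>* u y"
      using that(1) unfolding A_def by (auto intro: rtranclp.rtrancl_into_rtrancl)
    with that(2,3) show False unfolding A_def by simp
  qed
  have sym: "G a b \<Longrightarrow> G b a" for a b
    using F is_graphD(4) unfolding is_forest_def by blast
  show ?thesis
  proof (cases "A = {u}")
    case True
    then show ?thesis
      using cross[OF uA] u unfolding dominates_all_but_def by auto
  next
    case False
    then obtain u' where u': "u' \<in> A" "u' \<noteq> u" using uA by blast
    have "G v y" if "y < n" "y \<noteq> v" for y
    proof (cases "y \<in> A")
      case True
      then show ?thesis using cross[OF True v vA] sym by blast
    next
      case False
      show ?thesis
        using forest_no_square[OF F cross[OF uA v vA] sym[OF cross[OF u'(1) v vA]]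
            cross[OF u'(1) that(1) False] sym[OF cross[OF uA that(1) False]]] u'(2) that(2)
        by blast
    qed
    then show ?thesis using v unfolding dominates_all_but_def by blast
  qed
qed

lemma forest_dominates_all_but_unless_compl_connected_min_degree_2:
  assumes F: "is_forest n G"
    and ni: "\<not> (graph_connected n (compl_graph n G) \<and> min_degree_ge n (compl_graph n G) 2)"
  shows "\<exists>v<n. \<exists>w<n. dominates_all_but n G v w"
proof (cases "min_degree_ge n (compl_graph n G) 2")
  case True
  then show ?thesis
    using forest_compl_disconnected_imp_dominates_all_but[OF F] ni by blast
next
  case False
  then obtain v where "v < n" "degree n (compl_graph n G) v < 2"
    unfolding min_degree_ge_def by auto
  then show ?thesis using compl_degree_less_2_imp_dominates_all_but by blast
qed

section \<open>Stars and brooms\<close>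

definition is_star :: "nat \<Rightarrow> (nat \<Rightarrow> nat \<Rightarrow> bool) \<Rightarrow> nat \<Rightarrow> nat set \<Rightarrow> bool" where
  "is_star n E c L \<longleftrightarrow> c < n \<and> L \<subseteq> {..<n} \<and> c \<notin> L \<and>
     (\<forall>a b. E a b \<longleftrightarrow> (a = c \<and> b \<in> L) \<or> (b = c \<and> a \<in> L))"

text \<open>The broom \<open>is_broom n E v x w\<close> is the star centred at \<open>v\<close> on all vertices but \<open>w\<close>, with
  \<open>w\<close> attached as a pendant vertex to the leaf \<open>x\<close>.\<close>

definition is_broom :: "nat \<Rightarrow> (nat \<Rightarrow> nat \<Rightarrow> bool) \<Rightarrow> nat \<Rightarrow> nat \<Rightarrow> nat \<Rightarrow> bool" where
  "is_broom n E v x w \<longleftrightarrow> v < n \<and> x < n \<and> w < n \<and> v \<noteq> x \<and> v \<noteq> w \<and> x \<noteq> w \<and>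
     (\<forall>a b. E a b \<longleftrightarrow> (a = v \<and> b \<in> {..<n} - {v,w}) \<or> (b = v \<and> a \<in> {..<n} - {v,w})
        \<or> (a = x \<and> b = w) \<or> (a = w \<and> b = x))"

lemma forest_dominates_all_but_edge:
  assumes F: "is_forest n E" and dom: "dominates_all_but n E v w"
    and e: "E a b" "a \<noteq> v" "b \<noteq> v"
  shows "a = w \<or> b = w"
proof (rule ccontr)
  assume "\<not> (a = w \<or> b = w)"
  have g: "is_graph n E" using F by (simp add: is_forest_def)
  then have "E v a" "E b v"
    using dom e is_graphD[OF g] \<open>\<not> (a = w \<or> b = w)\<close> unfolding dominates_all_but_def by blast+
  then show False using forest_no_triangle[OF F, of v a b] e(1) by blast
qed

lemma forest_dominates_all_but_star:
  assumes F: "is_forest n E" and dom: "dominates_all_but n E v w" and v: "v < n"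
    and vw: "w = v \<or> E v w"
  shows "is_star n E v ({..<n} - {v})"
proof -
  have g: "is_graph n E" using F by (simp add: is_forest_def)
  have "E a b \<longleftrightarrow> (a = v \<and> b \<in> {..<n} - {v}) \<or> (b = v \<and> a \<in> {..<n} - {v})" for a b
  proof
    assume e: "E a b"
    show "(a = v \<and> b \<in> {..<n} - {v}) \<or> (b = v \<and> a \<in> {..<n} - {v})"
    proof (rule ccontr)
      assume "\<not> ?thesis"
      then have "a \<noteq> v" "b \<noteq> v" using is_graphD[OF g e] by auto
      then have "a = w \<or> b = w" by (rule forest_dominates_all_but_edge[OF F dom e])
      then show False using vw \<open>a \<noteq> v\<close> \<open>b \<noteq> v\<close> e forest_no_triangle[OF F, of v a b]
          is_graphD(4)[OF g] dom is_graphD(1,2)[OF g e] unfolding dominates_all_but_def by metis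
    qed
  next
    assume "(a = v \<and> b \<in> {..<n} - {v}) \<or> (b = v \<and> a \<in> {..<n} - {v})"
    then show "E a b"
      using dom vw is_graphD(4)[OF g] unfolding dominates_all_but_def by (cases "a = v") auto
  qed
  then show ?thesis using v unfolding is_star_def by auto
qed

lemma forest_dominates_all_but_star_minus:
  assumes F: "is_forest n E" and dom: "dominates_all_but n E v w" and v: "v < n"
    and wv: "w \<noteq> v" and w: "\<And>y. \<not> E w y"
  shows "is_star n E v ({..<n} - {v,w})"
proof -
  have g: "is_graph n E" using F by (simp add: is_forest_def)
  have "E a b \<longleftrightarrow> (a = v \<and> b \<in> {..<n} - {v,w}) \<or> (b = v \<and> a \<in> {..<n} - {v,w})" for a b
  proof
    assume e: "E a b"
    then have "a \<noteq> w" "b \<noteq> w" using w is_graphD(4)[OF g] by blast+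
    then have "a = v \<or> b = v" using forest_dominates_all_but_edge[OF F dom e] by blast
    then show "(a = v \<and> b \<in> {..<n} - {v,w}) \<or> (b = v \<and> a \<in> {..<n} - {v,w})"
      using is_graphD[OF g e] \<open>a \<noteq> w\<close> \<open>b \<noteq> w\<close> by auto
  next
    assume "(a = v \<and> b \<in> {..<n} - {v,w}) \<or> (b = v \<and> a \<in> {..<n} - {v,w})"
    then show "E a b" using dom is_graphD(4)[OF g] unfolding dominates_all_but_def by auto
  qed
  then show ?thesis using v unfolding is_star_def by auto
qed

lemma forest_dominates_all_but_broom:
  assumes F: "is_forest n E" and dom: "dominates_all_but n E v w" and v: "v < n"
    and wv: "w \<noteq> v" and nvw: "\<not> E v w" and wx: "E w x"
  shows "is_broom n E v x w"
proof -
  have g: "is_graph n E" using F by (simp add: is_forest_def)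
  have x: "x < n" "x \<noteq> w" "x \<noteq> v" and w: "w < n"
    using is_graphD[OF g wx] nvw by auto
  have uniq: "y = x" if "E w y" for y
  proof (rule ccontr)
    assume "y \<noteq> x"
    have "y \<noteq> v" using that nvw is_graphD(4)[OF g] by blast
    then have "E v x" "E y v"
      using dom x is_graphD[OF g that] is_graphD(4)[OF g] unfolding dominates_all_but_def by blast+
    then show False
      using forest_no_square[OF F _ _ that] wx is_graphD(4)[OF g] \<open>y \<noteq> x\<close> wv by blast
  qed
  have "E a b \<longleftrightarrow> (a = v \<and> b \<in> {..<n} - {v,w}) \<or> (b = v \<and> a \<in> {..<n} - {v,w})
      \<or> (a = x \<and> b = w) \<or> (a = w \<and> b = x)" for a b
  proof
    assume e: "E a b"
    show "(a = v \<and> b \<in> {..<n} - {v,w}) \<or> (b = v \<and> a \<in> {..<n} - {v,w})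
      \<or> (a = x \<and> b = w) \<or> (a = w \<and> b = x)"
    proof (cases "a = v \<or> b = v")
      case True
      then show ?thesis using e nvw is_graphD[OF g e] is_graphD(4)[OF g] by auto
    next
      case False
      then have "a = w \<or> b = w" using forest_dominates_all_but_edge[OF F dom e] by blast
      then show ?thesis using uniq e is_graphD(4)[OF g] by blast
    qed
  next
    assume "(a = v \<and> b \<in> {..<n} - {v,w}) \<or> (b = v \<and> a \<in> {..<n} - {v,w})
      \<or> (a = x \<and> b = w) \<or> (a = w \<and> b = x)"
    then show "E a b" using dom wx is_graphD(4)[OF g] unfolding dominates_all_but_def by auto
  qed
  then show ?thesis using v w x wv unfolding is_broom_def by auto
qed

lemma forest_dominates_all_but_cases:
  assumes F: "is_forest n E" and dom: "dominates_all_but n E v w" and v: "v < n"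
  obtains "is_star n E v ({..<n} - {v})" | "is_star n E v ({..<n} - {v,w})"
    | x where "is_broom n E v x w"
proof (cases "w = v \<or> E v w")
  case True
  then show ?thesis using forest_dominates_all_but_star[OF F dom v] that(1) by blast
next
  case False
  show ?thesis
  proof (cases "\<exists>x. E w x")
    case True
    then show ?thesis using forest_dominates_all_but_broom[OF F dom v] False that(3) by blast
  next
    case False
    then show ?thesis
      using forest_dominates_all_but_star_minus[OF F dom v] \<open>\<not> (w = v \<or> E v w)\<close> that(2) by blast
  qed
qed

lemma star_degree:
  assumes "is_star n E c L" "u < n"
  shows "degree n E u = (if u = c then card L else if u \<in> L then 1 else 0)"
proof -
  have c: "c < n" "c \<notin> L" and L: "L \<subseteq> {..<n}"
    and e: "\<And>a b. E a b \<longleftrightarrow> (a = c \<and> b \<in> L) \<or> (b = c \<and> a \<in> L)"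
    using assms(1) unfolding is_star_def by auto
  have "{y. y < n \<and> E u y} = (if u = c then L else if u \<in> L then {c} else {})"
    using c L e by auto
  then show ?thesis by (simp add: degree_def)
qed

lemma sum_lessThan_support:
  fixes h :: "nat \<Rightarrow> int"
  assumes "S \<subseteq> {..<n}" "\<And>u. u < n \<Longrightarrow> u \<notin> S \<Longrightarrow> h u = 0"
  shows "(\<Sum>u<n. h u) = (\<Sum>u\<in>S. h u)"
  by (rule sum.mono_neutral_right) (use assms in auto)

lemma star_degree_sum:
  assumes s: "is_star n E c L"
  shows "degree_sum n E = 2 * int (card L)"
proof -
  have c: "c < n" "c \<notin> L" and L: "L \<subseteq> {..<n}" using s unfolding is_star_def by auto
  have fL: "finite L" using finite_subset[OF L finite_lessThan] .
  have "degree_sum n E = (\<Sum>u\<in>insert c L. int (degree n E u))"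
    unfolding degree_sum_def by (rule sum_lessThan_support) (use c L star_degree[OF s] in auto)
  also have "\<dots> = int (degree n E c) + (\<Sum>u\<in>L. int (degree n E u))" using c fL by simp
  also have "(\<Sum>u\<in>L. int (degree n E u)) = (\<Sum>u\<in>L. 1)"
    using L c star_degree[OF s] by (intro sum.cong) auto
  also have "degree n E c = card L" using star_degree[OF s c(1)] by simp
  finally show ?thesis by simp
qed

lemma star_two_path_count:
  assumes s: "is_star n E c L"
  shows "two_path_count n E = int (card L) * (int (card L) - 1)"
proof -
  have c: "c < n" "c \<notin> L" and L: "L \<subseteq> {..<n}" using s unfolding is_star_def by auto
  have "two_path_count n E = (\<Sum>u\<in>{c}. int (degree n E u) * (int (degree n E u) - 1))"
    unfolding two_path_count_def by (rule sum_lessThan_support) (use c star_degree[OF s] in auto)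
  then show ?thesis using star_degree[OF s c(1)] by simp
qed

lemma broom_degree:
  assumes "is_broom n E v x w" "u < n"
  shows "degree n E u =
    (if u = v then n - 2 else if u = x then 2 else 1)"
proof -
  have v: "v < n" "x < n" "w < n" "v \<noteq> x" "v \<noteq> w" "x \<noteq> w"
    and e: "\<And>a b. E a b \<longleftrightarrow> (a = v \<and> b \<in> {..<n} - {v,w}) \<or> (b = v \<and> a \<in> {..<n} - {v,w})
        \<or> (a = x \<and> b = w) \<or> (a = w \<and> b = x)"
    using assms(1) unfolding is_broom_def by auto
  have "{y. y < n \<and> E u y} =
      (if u = v then {..<n} - {v,w} else if u = x then {v,w} else if u = w then {x} else {v})"
    using v e assms(2) by auto
  moreover have "card ({..<n} - {v,w}) = n - 2" using v by (subst card_Diff_subset) auto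
  ultimately show ?thesis using v by (simp add: degree_def)
qed

lemma broom_order:
  assumes "is_broom n E v x w"
  shows "n \<ge> 3"
proof -
  have "{v,x,w} \<subseteq> {..<n}" "card {v,x,w} = 3" using assms unfolding is_broom_def by auto
  then show ?thesis using card_mono[of "{..<n}" "{v,x,w}"] by simp
qed

lemma broom_degree_sum:
  assumes s: "is_broom n E v x w"
  shows "degree_sum n E = 2 * (int n - 1)"
proof -
  have v: "v < n" "x < n" "v \<noteq> x" using s unfolding is_broom_def by auto
  have n3: "n \<ge> 3" by (rule broom_order[OF s])
  have "degree_sum n E - int n = (\<Sum>u<n. int (degree n E u) - 1)"
    unfolding degree_sum_def by (simp add: sum_subtractf)
  also have "\<dots> = (\<Sum>u\<in>{v,x}. int (degree n E u) - 1)"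
    by (rule sum_lessThan_support) (use v broom_degree[OF s] in auto)
  also have "\<dots> = (int n - 3) + 1" using v n3 broom_degree[OF s] by (simp add: of_nat_diff)
  finally show ?thesis by simp
qed

lemma broom_two_path_count:
  assumes s: "is_broom n E v x w"
  shows "two_path_count n E = (int n - 2) * (int n - 3) + 2"
proof -
  have v: "v < n" "x < n" "v \<noteq> x" using s unfolding is_broom_def by auto
  have n3: "n \<ge> 3" by (rule broom_order[OF s])
  have "two_path_count n E = (\<Sum>u\<in>{v,x}. int (degree n E u) * (int (degree n E u) - 1))"
    unfolding two_path_count_def by (rule sum_lessThan_support) (use v broom_degree[OF s] in auto)
  then show ?thesis using v n3 broom_degree[OF s] by (simp add: of_nat_diff algebra_simps)
qed

lemma bij_betw_extend_lessThan:
  fixes n :: nat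
  assumes f: "bij_betw f A' A" and A': "A' \<subseteq> {..<n}" and A: "A \<subseteq> {..<n}"
  obtains g where "bij_betw g {..<n} {..<n}" "\<And>u. u \<in> A' \<Longrightarrow> g u = f u"
    "\<And>u. u < n \<Longrightarrow> u \<notin> A' \<Longrightarrow> g u \<notin> A"
proof -
  have "finite A'" "finite A" using finite_subset[OF A' finite_lessThan] finite_subset[OF A finite_lessThan] .
  then have "card ({..<n} - A') = card ({..<n} - A)"
    using A A' bij_betw_same_card[OF f] by (simp add: card_Diff_subset)
  then obtain h where h: "bij_betw h ({..<n} - A') ({..<n} - A)"
    using finite_same_card_bij[of "{..<n} - A'" "{..<n} - A"] by auto
  define g where "g u = (if u \<in> A' then f u else h u)" for u
  have "bij_betw g A' A \<longleftrightarrow> bij_betw f A' A" by (rule bij_betw_cong) (simp add: g_def)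
  moreover have "bij_betw g ({..<n} - A') ({..<n} - A) \<longleftrightarrow> bij_betw h ({..<n} - A') ({..<n} - A)"
    by (rule bij_betw_cong) (simp add: g_def)
  ultimately have "bij_betw g (A' \<union> ({..<n} - A')) (A \<union> ({..<n} - A))"
    using f h by (intro bij_betw_combine) auto
  moreover have "A' \<union> ({..<n} - A') = {..<n}" "A \<union> ({..<n} - A) = {..<n}" using A A' by auto
  ultimately have "bij_betw g {..<n} {..<n}" by simp
  then show ?thesis
  proof (rule that)
    show "g u = f u" if "u \<in> A'" for u using that by (simp add: g_def)
    show "g u \<notin> A" if "u < n" "u \<notin> A'" for u using bij_betwE[OF h] that by (simp add: g_def)
  qed
qed

lemma star_iso:
  assumes s: "is_star n E c L" and s': "is_star n E' c' L'" and cd: "card L' = card L"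
  shows "graph_iso n E' E"
proof -
  have c: "c < n" "c \<notin> L" and L: "L \<subseteq> {..<n}"
    and e: "\<And>a b. E a b \<longleftrightarrow> (a = c \<and> b \<in> L) \<or> (b = c \<and> a \<in> L)" using s unfolding is_star_def by auto
  have c': "c' < n" "c' \<notin> L'" and L': "L' \<subseteq> {..<n}"
    and e': "\<And>a b. E' a b \<longleftrightarrow> (a = c' \<and> b \<in> L') \<or> (b = c' \<and> a \<in> L')" using s' unfolding is_star_def by auto
  obtain \<phi> where \<phi>: "bij_betw \<phi> L' L"
    using finite_same_card_bij[OF finite_subset[OF L' finite_lessThan] finite_subset[OF L finite_lessThan] cd]
    by blast
  define f where "f u = (if u = c' then c else \<phi> u)" for u
  have "bij_betw f ({c'} \<union> L') ({c} \<union> L)"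
  proof (rule bij_betw_combine)
    show "bij_betw f {c'} {c}" by (simp add: f_def)
    have "bij_betw f L' L \<longleftrightarrow> bij_betw \<phi> L' L"
      by (rule bij_betw_cong) (use c' in \<open>auto simp: f_def\<close>)
    then show "bij_betw f L' L" using \<phi> by simp
  qed (use c in auto)
  then obtain g where g: "bij_betw g {..<n} {..<n}" "\<And>u. u \<in> {c'} \<union> L' \<Longrightarrow> g u = f u"
    "\<And>u. u < n \<Longrightarrow> u \<notin> {c'} \<union> L' \<Longrightarrow> g u \<notin> {c} \<union> L"
    by (rule bij_betw_extend_lessThan) (use c c' L L' in auto)
  have roles: "(g u = c \<longleftrightarrow> u = c') \<and> (g u \<in> L \<longleftrightarrow> u \<in> L')" if "u < n" for u
  proof (cases "u \<in> {c'} \<union> L'")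
    case True
    then have "g u = f u" by (rule g(2))
    then show ?thesis using True bij_betwE[OF \<phi>] c c' by (auto simp: f_def)
  next
    case False
    then have "g u \<notin> {c} \<union> L" by (rule g(3)[OF that])
    then show ?thesis using False by auto
  qed
  show ?thesis
    unfolding graph_iso_def
  proof (intro exI[of _ g] conjI allI impI)
    fix a b assume "a < n" "b < n"
    then show "E' a b \<longleftrightarrow> E (g a) (g b)" unfolding e e' using roles by blast
  qed (rule g(1))
qed

lemma broom_iso:
  assumes s: "is_broom n E v x w" and s': "is_broom n E' v' x' w'"
  shows "graph_iso n E' E"
proof -
  have v: "v < n" "x < n" "w < n" "v \<noteq> x" "v \<noteq> w" "x \<noteq> w"
    and e: "\<And>a b. E a b \<longleftrightarrow> (a = v \<and> b \<in> {..<n} - {v,w}) \<or> (b = v \<and> a \<in> {..<n} - {v,w})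
      \<or> (a = x \<and> b = w) \<or> (a = w \<and> b = x)"
    using s unfolding is_broom_def by auto
  have v': "v' < n" "x' < n" "w' < n" "v' \<noteq> x'" "v' \<noteq> w'" "x' \<noteq> w'"
    and e': "\<And>a b. E' a b \<longleftrightarrow> (a = v' \<and> b \<in> {..<n} - {v',w'}) \<or> (b = v' \<and> a \<in> {..<n} - {v',w'})
      \<or> (a = x' \<and> b = w') \<or> (a = w' \<and> b = x')"
    using s' unfolding is_broom_def by auto
  define f where "f u = (if u = v' then v else if u = x' then x else w)" for u
  have "bij_betw f {v',x',w'} {v,x,w}"
    unfolding bij_betw_def inj_on_def f_def using v v' by auto
  then obtain g where g: "bij_betw g {..<n} {..<n}" "\<And>u. u \<in> {v',x',w'} \<Longrightarrow> g u = f u"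
    "\<And>u. u < n \<Longrightarrow> u \<notin> {v',x',w'} \<Longrightarrow> g u \<notin> {v,x,w}"
    by (rule bij_betw_extend_lessThan) (use v v' in auto)
  have roles: "(g u = v \<longleftrightarrow> u = v') \<and> (g u = x \<longleftrightarrow> u = x') \<and> (g u = w \<longleftrightarrow> u = w') \<and> g u < n"
    if "u < n" for u
  proof (cases "u \<in> {v',x',w'}")
    case True
    then have "g u = f u" by (rule g(2))
    then show ?thesis using True v v' by (auto simp: f_def)
  next
    case False
    then have "g u \<notin> {v,x,w}" by (rule g(3)[OF that])
    then show ?thesis using False bij_betwE[OF g(1)] that by auto
  qed
  show ?thesis
    unfolding graph_iso_def
  proof (intro exI[of _ g] conjI allI impI)
    fix a b assume "a < n" "b < n"
    then show "E' a b \<longleftrightarrow> E (g a) (g b)"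
      unfolding e e' using roles[of a] roles[of b] by auto
  qed (rule g(1))
qed

section \<open>Pairs of disjoint edges\<close>

definition edges_avoiding :: "nat \<Rightarrow> (nat \<Rightarrow> nat \<Rightarrow> bool) \<Rightarrow> nat \<Rightarrow> nat \<Rightarrow> (nat \<times> nat) set" where
  "edges_avoiding n E a b = {(c,d). c < n \<and> d < n \<and> E c d \<and> c \<notin> {a,b} \<and> d \<notin> {a,b}}"

definition disjoint_edge_pairs :: "nat \<Rightarrow> (nat \<Rightarrow> nat \<Rightarrow> bool) \<Rightarrow> int" where
  "disjoint_edge_pairs n E =
     (\<Sum>a<n. \<Sum>b<n. of_bool (E a b) * int (card (edges_avoiding n E a b)))"

lemma finite_edges_avoiding: "finite (edges_avoiding n E a b)"
  by (rule finite_subset[of _ "{..<n} \<times> {..<n}"]) (auto simp: edges_avoiding_def)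

lemma edges_avoiding_sym: "(c,d) \<in> edges_avoiding n E a b \<Longrightarrow> is_graph n E \<Longrightarrow> (d,c) \<in> edges_avoiding n E a b"
  unfolding edges_avoiding_def using is_graphD(4) by auto

lemma card_edges_avoiding_eq_sum:
  "int (card (edges_avoiding n E a b)) =
   (\<Sum>c<n. \<Sum>d<n. of_bool (E c d \<and> c \<notin> {a,b} \<and> d \<notin> {a,b}))"
proof -
  have "(\<Sum>c<n. \<Sum>d<n. of_bool (E c d \<and> c \<notin> {a,b} \<and> d \<notin> {a,b})) =
      (\<Sum>(c,d)\<in>{..<n} \<times> {..<n}. of_bool (E c d \<and> c \<notin> {a,b} \<and> d \<notin> {a,b}))"
    by (rule sum.cartesian_product)
  also have "\<dots> = int (card (({..<n} \<times> {..<n}) \<inter> {(c,d). E c d \<and> c \<notin> {a,b} \<and> d \<notin> {a,b}}))"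
    by (subst sum_of_bool_eq[symmetric]) (auto intro!: sum.cong simp: split_beta)
  also have "({..<n} \<times> {..<n}) \<inter> {(c,d). E c d \<and> c \<notin> {a,b} \<and> d \<notin> {a,b}} = edges_avoiding n E a b"
    unfolding edges_avoiding_def by auto
  finally show ?thesis by simp
qed

lemma sum_lessThan_of_bool_eq_mult:
  assumes "a < (n::nat)"
  shows "(\<Sum>c<n. of_bool (c = a) * f c) = (f a :: int)"
proof -
  have "(\<Sum>c<n. of_bool (c = a) * f c) = (\<Sum>c<n. if c = a then f a else 0)"
    by (intro sum.cong) auto
  then show ?thesis using assms by simp
qed

lemma sum_lessThan_mult_of_bool_eq:
  assumes "a < (n::nat)"
  shows "(\<Sum>c<n. f c * of_bool (c = a)) = (f a :: int)"
  using sum_lessThan_of_bool_eq_mult[OF assms, of f] by (simp only: mult.commute)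

text \<open>Inclusion-exclusion over the oriented edges meeting \<open>{a, b}\<close>, where \<open>(a, b)\<close> and \<open>(b, a)\<close>
  are counted twice.\<close>

lemma card_edges_avoiding:
  assumes g: "is_graph n E" and ab: "E a b"
  shows "int (card (edges_avoiding n E a b)) =
    degree_sum n E - 2 * int (degree n E a) - 2 * int (degree n E b) + 2"
proof -
  have a: "a < n" "a \<noteq> b" and b: "b < n" using is_graphD[OF g ab] by auto
  have sym: "(of_bool (E c d) :: int) = of_bool (E d c)" for c d
    using is_graphD(4)[OF g] by (cases "E c d") auto
  let ?S = "\<lambda>h. (\<Sum>c<n. \<Sum>d<n. (h c d :: int))"
  have pw: "(of_bool (E c d) :: int) = of_bool (E c d \<and> c \<notin> {a,b} \<and> d \<notin> {a,b})
      + of_bool (c = a) * of_bool (E c d) + of_bool (c = b) * of_bool (E c d)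
      + of_bool (E c d) * of_bool (d = a) + of_bool (E c d) * of_bool (d = b)
      - of_bool (c = a) * of_bool (d = b) - of_bool (c = b) * of_bool (d = a)" for c d
    using is_graphD(3)[OF g, of c d] ab is_graphD(4)[OF g ab] a by (cases "E c d") auto
  have out: "?S (\<lambda>c d. of_bool (c = u) * of_bool (E c d)) = int (degree n E u)"
    and into: "?S (\<lambda>c d. of_bool (E c d) * of_bool (d = u)) = int (degree n E u)" if "u < n" for u
  proof -
    show "?S (\<lambda>c d. of_bool (c = u) * of_bool (E c d)) = int (degree n E u)"
      by (simp only: sum_distrib_left[symmetric] sum_lessThan_of_bool_eq_mult[OF that] int_degree_eq_sum)
    have "?S (\<lambda>c d. of_bool (E c d) * of_bool (d = u)) = (\<Sum>c<n. of_bool (E c u))"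
      by (simp only: sum_lessThan_mult_of_bool_eq[OF that])
    also have "\<dots> = int (degree n E u)" by (simp only: sym int_degree_eq_sum)
    finally show "?S (\<lambda>c d. of_bool (E c d) * of_bool (d = u)) = int (degree n E u)" .
  qed
  have one: "?S (\<lambda>c d. of_bool (c = u) * of_bool (d = v)) = 1" if "u < n" "v < n" for u v
  proof -
    have "(\<Sum>d<n. of_bool (d = v)) = (1 :: int)"
      using sum_lessThan_of_bool_eq_mult[OF that(2), of "\<lambda>_. 1"] by simp
    then have "?S (\<lambda>c d. of_bool (c = u) * of_bool (d = v)) = (\<Sum>c<n. of_bool (c = u) * 1)"
      by (simp only: sum_distrib_left[symmetric])
    also have "\<dots> = 1" by (rule sum_lessThan_of_bool_eq_mult[OF that(1)])
    finally show ?thesis .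
  qed
  have "degree_sum n E = ?S (\<lambda>c d. of_bool (E c d))"
    by (simp only: degree_sum_def int_degree_eq_sum)
  also have "\<dots> = ?S (\<lambda>c d. of_bool (E c d \<and> c \<notin> {a,b} \<and> d \<notin> {a,b})
      + of_bool (c = a) * of_bool (E c d) + of_bool (c = b) * of_bool (E c d)
      + of_bool (E c d) * of_bool (d = a) + of_bool (E c d) * of_bool (d = b)
      - of_bool (c = a) * of_bool (d = b) - of_bool (c = b) * of_bool (d = a))"
    by (intro sum.cong refl pw)
  also have "\<dots> = int (card (edges_avoiding n E a b)) + int (degree n E a) + int (degree n E b)
      + int (degree n E a) + int (degree n E b) - 1 - 1"
    by (simp only: sum.distrib sum_subtractf card_edges_avoiding_eq_sum
        out[OF a(1)] out[OF b] into[OF a(1)] into[OF b] one[OF a(1) b] one[OF b a(1)])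
  finally show ?thesis by linarith
qed

lemma disjoint_edge_pairs_formula:
  assumes g: "is_graph n E"
  shows "disjoint_edge_pairs n E = degree_sum n E ^ 2 - 2 * degree_sum n E - 4 * two_path_count n E"
proof -
  let ?Y = "\<lambda>a b. (of_bool (E a b) :: int)"
  let ?d = "\<lambda>a. int (degree n E a)"
  have sym: "?Y a b = ?Y b a" for a b
    using is_graphD(4)[OF g] by (cases "E a b") auto
  have "disjoint_edge_pairs n E =
      (\<Sum>a<n. \<Sum>b<n. (degree_sum n E + 2) * ?Y a b - 2 * (?d a * ?Y a b) - 2 * (?d b * ?Y a b))"
    unfolding disjoint_edge_pairs_def
    by (intro sum.cong refl) (simp add: card_edges_avoiding[OF g] algebra_simps)
  also have "\<dots> = (degree_sum n E + 2) * (\<Sum>a<n. \<Sum>b<n. ?Y a b) - 2 * (\<Sum>a<n. \<Sum>b<n. ?d a * ?Y a b)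
      - 2 * (\<Sum>a<n. \<Sum>b<n. ?d b * ?Y a b)"
    by (simp only: sum.distrib sum_subtractf sum_distrib_left)
  also have "(\<Sum>a<n. \<Sum>b<n. ?Y a b) = degree_sum n E"
    by (simp only: degree_sum_def int_degree_eq_sum)
  also have "(\<Sum>a<n. \<Sum>b<n. ?d a * ?Y a b) = (\<Sum>a<n. ?d a * ?d a)"
    by (simp only: sum_distrib_left[symmetric] int_degree_eq_sum)
  also have "(\<Sum>a<n. \<Sum>b<n. ?d b * ?Y a b) = (\<Sum>b<n. \<Sum>a<n. ?d b * ?Y b a)"
    by (subst sum.swap) (simp only: sym)
  also have "\<dots> = (\<Sum>a<n. ?d a * ?d a)"
    by (simp only: sum_distrib_left[symmetric] int_degree_eq_sum)
  also have "(\<Sum>a<n. ?d a * ?d a) = two_path_count n E + degree_sum n E"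
    unfolding two_path_count_def degree_sum_def by (simp add: sum.distrib[symmetric] algebra_simps)
  finally show ?thesis by (simp add: algebra_simps power2_eq_square)
qed

lemma disjoint_edge_pairs_eq_0_imp:
  assumes W: "disjoint_edge_pairs n E = 0" and ab: "E a b" "a < n" "b < n"
  shows "edges_avoiding n E a b = {}"
proof -
  have nn: "0 \<le> of_bool (E a b) * int (card (edges_avoiding n E a b))" for a b by simp
  have "(\<Sum>b<n. of_bool (E a b) * int (card (edges_avoiding n E a b))) = 0"
    using W ab unfolding disjoint_edge_pairs_def
    by (subst (asm) sum_nonneg_eq_0_iff) (auto intro: sum_nonneg nn)
  then have "of_bool (E a b) * int (card (edges_avoiding n E a b)) = 0"
    using ab by (subst (asm) sum_nonneg_eq_0_iff) (auto intro: nn)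
  then show ?thesis using ab finite_edges_avoiding by simp
qed

lemma star_of_edge_centre:
  assumes g: "is_graph n E" and c: "c < n" and all: "\<And>p q. E p q \<Longrightarrow> p = c \<or> q = c"
  shows "is_star n E c {u. u < n \<and> E c u}"
  unfolding is_star_def using c all is_graphD[OF g] by blast

text \<open>If any two edges meet, then either one endpoint of some edge lies on all edges, or three
  edges pairwise meeting in different vertices form a triangle.\<close>

lemma forest_intersecting_edges_imp_star:
  assumes F: "is_forest n E" and n: "n \<ge> 1"
    and meet: "\<And>a b c d. E a b \<Longrightarrow> E c d \<Longrightarrow> c \<in> {a,b} \<or> d \<in> {a,b}"
  shows "\<exists>c L. is_star n E c L"
proof -
  have g: "is_graph n E" using F by (simp add: is_forest_def)
  show ?thesis
  proof (cases "\<exists>a b. E a b")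
    case False
    then have "is_star n E 0 {}" unfolding is_star_def using n by auto
    then show ?thesis by blast
  next
    case True
    then obtain a b where ab: "E a b" by blast
    show ?thesis
    proof (cases "\<forall>p q. E p q \<longrightarrow> p = a \<or> q = a")
      case True
      then show ?thesis using star_of_edge_centre[OF g is_graphD(1)[OF g ab]] by blast
    next
      case False
      then obtain x where bx: "E b x" "x \<noteq> a"
        using meet[OF ab] is_graphD(4)[OF g] by blast
      show ?thesis
      proof (cases "\<forall>p q. E p q \<longrightarrow> p = b \<or> q = b")
        case True
        then show ?thesis using star_of_edge_centre[OF g is_graphD(2)[OF g ab]] by blast
      next
        case False
        then obtain y where ay: "E a y" "y \<noteq> b"
          using meet[OF ab] is_graphD(4)[OF g] by blast
        have "x = y"
          using meet[OF bx(1) ay(1)] bx ay is_graphD(3)[OF g ay(1)] is_graphD(3)[OF g ab] by auto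
        then show ?thesis
          using forest_no_triangle[OF F, of a b x] ab bx ay(1) is_graphD(4)[OF g] by blast
      qed
    qed
  qed
qed

lemma forest_degree_off_edge:
  assumes F: "is_forest n E" and ab: "E a b" and u: "u < n" "u \<notin> {a,b}"
  shows "degree n E u \<le> Suc (card {t. (u,t) \<in> edges_avoiding n E a b})"
proof -
  have g: "is_graph n E" using F by (simp add: is_forest_def)
  let ?N = "{t. t < n \<and> E u t}" and ?A = "{t. (u,t) \<in> edges_avoiding n E a b}"
  have "\<not> (E u a \<and> E u b)"
    using forest_no_triangle[OF F, of u a b] ab is_graphD(4)[OF g] by blast
  then have "?N \<subseteq> insert a ?A \<or> ?N \<subseteq> insert b ?A"
    using u unfolding edges_avoiding_def by auto
  then obtain t where sub: "?N \<subseteq> insert t ?A" by blast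
  have fin: "finite ?A" by (rule finite_subset[of _ "{..<n}"]) (auto simp: edges_avoiding_def)
  then have "card ?N \<le> card (insert t ?A)" using sub by (intro card_mono) auto
  also have "\<dots> \<le> Suc (card ?A)" using fin by (simp add: card_insert_if)
  finally show ?thesis by (simp add: degree_def)
qed

lemma forest_degree_off_edge_touch:
  assumes F: "is_forest n E" and ab: "E a b" and u: "u < n" "u \<notin> {a,b}"
    and few: "card {t. (u,t) \<in> edges_avoiding n E a b} \<le> 1" and deg: "1 < degree n E u"
  shows "E u a \<or> E u b"
proof (rule ccontr)
  assume "\<not> (E u a \<or> E u b)"
  then have "{t. t < n \<and> E u t} \<subseteq> {t. (u,t) \<in> edges_avoiding n E a b}"
    using u unfolding edges_avoiding_def by auto
  moreover have "finite {t. (u,t) \<in> edges_avoiding n E a b}"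
    by (rule finite_subset[of _ "{..<n}"]) (auto simp: edges_avoiding_def)
  ultimately have "degree n E u \<le> 1"
    unfolding degree_def using few card_mono order_trans by blast
  with deg show False by simp
qed

lemma int_mult_pred_nonneg: "int d * (int d - 1) \<ge> 0"
  by (cases d) simp_all

lemma int_mult_pred_eq_0: "d \<le> 1 \<Longrightarrow> int d * (int d - 1) = 0"
  by (cases d) simp_all

lemma int_mult_pred_le_2: "d \<le> 2 \<Longrightarrow> int d * (int d - 1) \<le> 2"
proof -
  assume "d \<le> 2"
  then have "d = 0 \<or> d = 1 \<or> d = 2" by linarith
  then show ?thesis by auto
qed

lemma edges_avoiding_eq_pair:
  assumes g: "is_graph n E" and few: "card (edges_avoiding n E a b) \<le> 2"
    and xy: "(x,y) \<in> edges_avoiding n E a b"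
  shows "edges_avoiding n E a b = {(x,y),(y,x)}" "x \<noteq> y"
proof -
  have yx: "(y,x) \<in> edges_avoiding n E a b" by (rule edges_avoiding_sym[OF xy g])
  show "x \<noteq> y" using xy is_graphD(3)[OF g] unfolding edges_avoiding_def by auto
  then have two: "card {(x,y),(y,x)} = 2" by simp
  show "edges_avoiding n E a b = {(x,y),(y,x)}"
  proof (rule card_subset_eq[OF finite_edges_avoiding, symmetric])
    show sub: "{(x,y),(y,x)} \<subseteq> edges_avoiding n E a b" using xy yx by simp
    show "card {(x,y),(y,x)} = card (edges_avoiding n E a b)"
      using two few card_mono[OF finite_edges_avoiding sub] by simp
  qed
qed

text \<open>Each way of joining both \<open>x\<close> and \<open>y\<close> to \<open>{a, b}\<close> closes a triangle or a 4-cycle.\<close>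

lemma forest_disjoint_edges_no_double_link:
  assumes F: "is_forest n E" and ab: "E a b" and xy: "E x y"
    and off: "x \<notin> {a,b}" "y \<notin> {a,b}" and touch: "E x a \<or> E x b" "E y a \<or> E y b"
  shows False
proof -
  have sym: "E u v \<Longrightarrow> E v u" for u v
    using F is_graphD(4) unfolding is_forest_def by blast
  consider "E x a" "E a y" | "E x b" "E b y" | "E x a" "E y b" | "E x b" "E y a"
    using touch off sym by blast
  then show False
  proof cases
    case 1
    then show ?thesis using forest_no_triangle[OF F, of x a y] sym[OF xy] by blast
  next
    case 2
    then show ?thesis using forest_no_triangle[OF F, of x b y] sym[OF xy] by blast
  next
    case 3
    then show ?thesis using forest_no_square[OF F 3(1) ab sym[OF 3(2)] sym[OF xy]] off by blast
  next
    case 4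
    then show ?thesis using forest_no_square[OF F 4(1) sym[OF ab] sym[OF 4(2)] sym[OF xy]] off by blast
  qed
qed

text \<open>Away from an edge \<open>ab\<close> with at most one disjoint edge \<open>xy\<close>, only \<open>x\<close> and \<open>y\<close> can have
  degree two, and not both.\<close>

lemma forest_two_paths_off_edge:
  assumes F: "is_forest n E" and ab: "E a b" and few: "card (edges_avoiding n E a b) \<le> 2"
  shows "(\<Sum>u\<in>{..<n} - {a,b}. int (degree n E u) * (int (degree n E u) - 1))
    \<le> int (card (edges_avoiding n E a b))"
proof -
  have g: "is_graph n E" using F by (simp add: is_forest_def)
  let ?h = "\<lambda>u. int (degree n E u) * (int (degree n E u) - 1)"
  let ?Av = "edges_avoiding n E a b"
  show ?thesis
  proof (cases "?Av = {}")
    case True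
    have "?h u = 0" if "u \<in> {..<n} - {a,b}" for u
      using forest_degree_off_edge[OF F ab, of u] that True by (intro int_mult_pred_eq_0) simp
    then have "(\<Sum>u\<in>{..<n} - {a,b}. ?h u) = 0" by (intro sum.neutral ballI)
    then show ?thesis by simp
  next
    case False
    then obtain x y where xy: "(x,y) \<in> ?Av" by auto
    note Av = edges_avoiding_eq_pair[OF g few xy]
    have rest: "x \<in> {..<n} - {a,b}" "y \<in> {..<n} - {a,b}" "E x y"
      using xy unfolding edges_avoiding_def by auto
    have nbrs: "{t. (u,t) \<in> ?Av} = (if u = x then {y} else if u = y then {x} else {})" for u
      using Av unfolding Av(1) by auto
    have deg: "degree n E u \<le> (if u = x \<or> u = y then 2 else 1)" if "u \<in> {..<n} - {a,b}" for u
      using forest_degree_off_edge[OF F ab, of u] that nbrs[of u] by (auto split: if_splits)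
    have touch: "E u a \<or> E u b" if "?h u > 0" "u \<in> {x,y}" for u
    proof (rule forest_degree_off_edge_touch[OF F ab])
      show "u < n" "u \<notin> {a,b}" using that(2) rest by auto
      show "card {t. (u,t) \<in> ?Av} \<le> 1" using nbrs[of u] that(2) by auto
      show "1 < degree n E u" using that(1) int_mult_pred_eq_0[of "degree n E u"] by linarith
    qed
    have "\<not> (?h x > 0 \<and> ?h y > 0)"
      using forest_disjoint_edges_no_double_link[OF F ab rest(3)] touch rest by blast
    moreover have "?h x \<le> 2" "?h y \<le> 2"
      using deg[OF rest(1)] deg[OF rest(2)] by (auto intro: int_mult_pred_le_2)
    moreover have "(\<Sum>u\<in>{..<n} - {a,b}. ?h u) = (\<Sum>u\<in>{x,y}. ?h u)"
    proof (rule sum.mono_neutral_right)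
      show "\<forall>u\<in>{..<n} - {a,b} - {x,y}. ?h u = 0"
      proof
        fix u assume "u \<in> {..<n} - {a,b} - {x,y}"
        then show "?h u = 0" using deg[of u] by (intro int_mult_pred_eq_0) auto
      qed
    qed (use rest in auto)
    moreover have "0 \<le> ?h x" "0 \<le> ?h y" by (rule int_mult_pred_nonneg)+
    moreover have "(\<Sum>u\<in>{x,y}. ?h u) = ?h x + ?h y" using Av(2) by simp
    moreover have "int (card ?Av) = 2" using Av by simp
    ultimately show ?thesis by linarith
  qed
qed

lemma two_path_count_split:
  assumes "a < n" "b < n" "a \<noteq> b"
  shows "two_path_count n E = int (degree n E a) * (int (degree n E a) - 1)
    + int (degree n E b) * (int (degree n E b) - 1)
    + (\<Sum>u\<in>{..<n} - {a,b}. int (degree n E u) * (int (degree n E u) - 1))"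
proof -
  let ?h = "\<lambda>u. int (degree n E u) * (int (degree n E u) - 1)"
  have "two_path_count n E = ?h a + (\<Sum>u\<in>{..<n} - {a}. ?h u)"
    unfolding two_path_count_def using assms by (simp add: sum.remove)
  also have "(\<Sum>u\<in>{..<n} - {a}. ?h u) = ?h b + (\<Sum>u\<in>{..<n} - {a} - {b}. ?h u)"
    by (rule sum.remove) (use assms in auto)
  also have "{..<n} - {a} - {b} = {..<n} - {a,b}" by auto
  finally show ?thesis by simp
qed

lemma broom_degree_arithmetic:
  fixes n p q r :: int
  assumes p: "p \<ge> 1" and q: "q \<ge> 1" and r: "0 \<le> r" "r \<le> 2 * n - 2 * p - 2 * q"
    and w: "2 * n - 2 * p - 2 * q \<le> 3"
    and Q: "(n - 2) * (n - 3) + 2 = p * (p - 1) + q * (q - 1) + r"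
  shows "p = n - 2 \<or> q = n - 2"
proof -
  have "p + q = n \<or> p + q = n - 1" using r w by linarith
  then show ?thesis
  proof
    assume s: "p + q = n"
    then have "r = 0" "q = n - p" using r by linarith+
    moreover have "2 * ((p - 2) * (p - (n - 2))) =
        p * (p - 1) + (n - p) * (n - p - 1) - ((n - 2) * (n - 3) + 2)"
      by (simp add: algebra_simps)
    ultimately have "(p - 2) * (p - (n - 2)) = 0" using Q by simp
    then show ?thesis using s by auto
  next
    assume s: "p + q = n - 1"
    then have "r \<le> 2" "n = p + q + 1" using r by linarith+
    moreover have "2 * ((p - 1) * (q - 1)) = (p + q - 1) * (p + q - 2) - (p * (p - 1) + q * (q - 1))"
      by (simp add: algebra_simps)
    ultimately have "(p - 1) * (q - 1) \<le> 0" using Q by simp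
    moreover have "(p - 1) * (q - 1) \<ge> 0" using p q by simp
    ultimately have "(p - 1) * (q - 1) = 0" by linarith
    then have "p = 1 \<or> q = 1" by simp
    then show ?thesis using s by auto
  qed
qed

text \<open>A broom has \<open>8n - 24\<close> ordered pairs of disjoint edges but \<open>2n - 2\<close> oriented edges, so
  some edge \<open>ab\<close> misses at most three oriented edges; the two-path count then forces
  \<open>a\<close> or \<open>b\<close> to have degree \<open>n - 2\<close>.\<close>

lemma forest_broom_invariants_imp_degree:
  assumes F: "is_forest n E" and n4: "n \<ge> 4"
    and D: "degree_sum n E = 2 * (int n - 1)"
    and Q: "two_path_count n E = (int n - 2) * (int n - 3) + 2"
  shows "\<exists>a<n. degree n E a = n - 2"
proof -
  have g: "is_graph n E" using F by (simp add: is_forest_def)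
  have W: "disjoint_edge_pairs n E = 8 * int n - 24"
    using disjoint_edge_pairs_formula[OF g] D Q by (simp add: algebra_simps power2_eq_square)
  obtain a b where ab: "E a b" and few: "card (edges_avoiding n E a b) \<le> 3"
  proof (rule ccontr)
    assume "\<not> thesis"
    then have many: "E a b \<Longrightarrow> 4 \<le> int (card (edges_avoiding n E a b))" for a b
      using that by force
    have "4 * degree_sum n E = (\<Sum>a<n. \<Sum>b<n. of_bool (E a b) * 4)"
      by (simp add: degree_sum_def int_degree_eq_sum sum_distrib_left sum_distrib_right mult.commute
          del: sum_of_bool_eq sum_of_bool_mult_eq sum_mult_of_bool_eq)
    also have "\<dots> \<le> disjoint_edge_pairs n E"
      unfolding disjoint_edge_pairs_def by (intro sum_mono) (use many in auto)
    finally show False using W D by simp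
  qed
  have a: "a < n" "b < n" "a \<noteq> b" using is_graphD[OF g ab] by auto
  define p where "p = int (degree n E a)"
  define q where "q = int (degree n E b)"
  have card: "int (card (edges_avoiding n E a b)) = 2 * int n - 2 * p - 2 * q"
    using card_edges_avoiding[OF g ab] D unfolding p_def q_def by simp
  have "b \<in> {t. t < n \<and> E a t}" "a \<in> {t. t < n \<and> E b t}" using ab a is_graphD(4)[OF g ab] by auto
  then have "p \<ge> 1" "q \<ge> 1"
    unfolding p_def q_def degree_def by (auto simp: Suc_le_eq card_gt_0_iff)
  moreover have "int (card (edges_avoiding n E a b)) \<le> 3" using few by simp
  then have "int (card (edges_avoiding n E a b)) \<le> 2" using card by presburger
  then have "card (edges_avoiding n E a b) \<le> 2" by simp
  then have R: "(\<Sum>u\<in>{..<n} - {a,b}. int (degree n E u) * (int (degree n E u) - 1))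
      \<le> 2 * int n - 2 * p - 2 * q"
    using forest_two_paths_off_edge[OF F ab] card by simp
  have "(int n - 2) * (int n - 3) + 2 = p * (p - 1) + q * (q - 1)
      + (\<Sum>u\<in>{..<n} - {a,b}. int (degree n E u) * (int (degree n E u) - 1))"
    using Q two_path_count_split[OF a, of E] unfolding p_def q_def by simp
  moreover have "2 * int n - 2 * p - 2 * q \<le> 3" using few card by simp
  ultimately have "p = int n - 2 \<or> q = int n - 2"
    using broom_degree_arithmetic[OF \<open>p \<ge> 1\<close> \<open>q \<ge> 1\<close> sum_nonneg[OF int_mult_pred_nonneg] R] by blast
  then show ?thesis unfolding p_def q_def using a n4 by auto
qed

lemma broom_of_order_3_is_star:
  assumes s: "is_broom n E v x w" and n3: "n = 3"
  shows "is_star n E x {v,w}"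
proof -
  have v: "v < n" "x < n" "w < n" "v \<noteq> x" "v \<noteq> w" "x \<noteq> w"
    and e: "\<And>a b. E a b \<longleftrightarrow> (a = v \<and> b \<in> {..<n} - {v,w}) \<or> (b = v \<and> a \<in> {..<n} - {v,w})
      \<or> (a = x \<and> b = w) \<or> (a = w \<and> b = x)"
    using s unfolding is_broom_def by auto
  have "{v,x,w} = {..<n}"
    by (rule card_subset_eq) (use v n3 in auto)
  then have "{..<n} - {v,w} = {x}" using v by auto
  then show ?thesis unfolding is_star_def using v e by auto
qed

lemma star_determined_by_phi_T:
  assumes F: "is_forest n G" and s: "is_star n G c L" and g': "is_graph n G'"
    and p1: "phi_T n G' = phi_T n G"
    and p2: "phi_T n (compl_graph n G') = phi_T n (compl_graph n G)"
  shows "graph_iso n G' G"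
proof -
  note inv = phi_T_pair_eq_forest_invariants[OF F g' p1 p2]
  have "disjoint_edge_pairs n G' = 0"
    using disjoint_edge_pairs_formula[OF g'] inv(2,3) star_degree_sum[OF s] star_two_path_count[OF s]
    by (simp add: algebra_simps power2_eq_square)
  then have "edges_avoiding n G' a b = {}" if "G' a b" for a b
    using disjoint_edge_pairs_eq_0_imp that is_graphD[OF g' that] by blast
  then have "c \<in> {a,b} \<or> d \<in> {a,b}" if "G' a b" "G' c d" for a b c d
    using that is_graphD[OF g' that(2)] unfolding edges_avoiding_def by blast
  moreover have "n \<ge> 1" using s unfolding is_star_def by auto
  ultimately obtain c' L' where s': "is_star n G' c' L'"
    using forest_intersecting_edges_imp_star[OF inv(1)] by blast
  have "card L' = card L"
    using star_degree_sum[OF s] star_degree_sum[OF s'] inv(2) by simp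
  then show ?thesis by (rule star_iso[OF s s'])
qed

lemma broom_determined_by_phi_T:
  assumes F: "is_forest n G" and s: "is_broom n G v x w" and g': "is_graph n G'"
    and p1: "phi_T n G' = phi_T n G"
    and p2: "phi_T n (compl_graph n G') = phi_T n (compl_graph n G)"
  shows "graph_iso n G' G"
proof (cases "n = 3")
  case True
  then show ?thesis
    using star_determined_by_phi_T[OF F broom_of_order_3_is_star[OF s] g' p1 p2] by simp
next
  case False
  then have n4: "n \<ge> 4" using broom_order[OF s] by simp
  note inv = phi_T_pair_eq_forest_invariants[OF F g' p1 p2]
  have D: "degree_sum n G' = 2 * (int n - 1)" using inv(2) broom_degree_sum[OF s] by simp
  obtain a where a: "a < n" "degree n G' a = n - 2"
    using forest_broom_invariants_imp_degree[OF inv(1) n4 D] inv(3) broom_two_path_count[OF s] by auto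
  have "{t. t < n \<and> G' a t} \<subseteq> {..<n} - {a}" using is_graphD(3)[OF g'] by auto
  then have "card (({..<n} - {a}) - {t. t < n \<and> G' a t}) = 1"
    using a n4 by (subst card_Diff_subset) (auto simp: degree_def)
  then obtain w' where w': "({..<n} - {a}) - {t. t < n \<and> G' a t} = {w'}"
    by (rule card_1_singletonE)
  then have "w' < n" "\<not> G' a w'" "dominates_all_but n G' a w'"
    unfolding dominates_all_but_def by auto
  from forest_dominates_all_but_cases[OF inv(1) this(3) a(1)] show ?thesis
  proof cases
    case 1
    then have "G' x y \<longleftrightarrow> (x = a \<and> y \<in> {..<n} - {a}) \<or> (y = a \<and> x \<in> {..<n} - {a})" for x y
      unfolding is_star_def by blast
    moreover have "w' \<in> {..<n} - {a}" using w' by blast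
    ultimately show ?thesis using \<open>\<not> G' a w'\<close> by blast
  next
    case 2
    then have "degree_sum n G' = 2 * int (card ({..<n} - {a,w'}))" by (rule star_degree_sum)
    moreover have "a \<noteq> w'" using w' by blast
    then have "card ({..<n} - {a,w'}) = n - 2" using a(1) \<open>w' < n\<close>
      by (subst card_Diff_subset) auto
    moreover have "int (n - 2) = int n - 2" using n4 by simp
    ultimately show ?thesis using D by simp
  next
    case (3 x')
    then show ?thesis by (rule broom_iso[OF s])
  qed
qed

theorem lemma2p6:
  fixes n :: nat and G :: "nat \<Rightarrow> nat \<Rightarrow> bool"
  assumes "is_forest n G"
  shows "(graph_connected n (compl_graph n G) \<and> min_degree_ge n (compl_graph n G) 2)
    \<or> (\<forall>G'. is_graph n G' \<and> phi_T n G' = phi_T n G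
              \<and> phi_T n (compl_graph n G') = phi_T n (compl_graph n G)
            \<longrightarrow> graph_iso n G' G)"
proof (cases "graph_connected n (compl_graph n G) \<and> min_degree_ge n (compl_graph n G) 2")
  case False
  obtain v w where v: "v < n" and dom: "dominates_all_but n G v w"
    using forest_dominates_all_but_unless_compl_connected_min_degree_2[OF assms False] by blast
  have "graph_iso n G' G"
    if "is_graph n G'" "phi_T n G' = phi_T n G"
      "phi_T n (compl_graph n G') = phi_T n (compl_graph n G)" for G'
    using forest_dominates_all_but_cases[OF assms dom v]
  proof cases
    case 1
    then show ?thesis by (rule star_determined_by_phi_T[OF assms _ that])
  next
    case 2
    then show ?thesis by (rule star_determined_by_phi_T[OF assms _ that])
  next
    case (3 x)
    then show ?thesis by (rule broom_determined_by_phi_T[OF assms _ that])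
  qed
  then show ?thesis by blast
qed simp

end
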